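(* Let $L<U$ be reals and $n\ge1$. For the variance function $f:[L,U]^n\to\mathbb{R}$, $f(x_1,\dots,x_n)=\frac1n\sum_{i=1}^n(x_i-\bar x)^2$ with $\bar x=\frac1n\sum_{i=1}^n x_i$, and any $\beta>0$, the $\beta$-smooth sensitivity $S^*_{f,\beta}(V)$ of $f$ at a given dataset $V=(x_1,\dots,x_n)\in[L,U]^n$ can be computed in $\mathcal{O}(n^2)$ time.
   Context: A dataset is a list $V=(x_1,\dots,x_n)$ of $n$ real numbers in $[L,U]$. For datasets $x,y\in[L,U]^n$, $d(x,y)$ is the number of positions in which they differ; $x,y$ are neighbors if $d(x,y)=1$. The local sensitivity of $f$ at $x$ is $LS_f(x)=\max_{y:\,d(x,y)=1}|f(x)-f(y)|$. For $\beta>0$, the $\beta$-smooth sensitivity of $f$ at $x$ is $S^*_{f,\beta}(x)=\max_{y\in[L,U]^n} LS_f(y)\,e^{-\beta d(x,y)}$. *)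

theory Defs
  imports Complex_Main
begin

definition datasets :: "nat \<Rightarrow> real \<Rightarrow> real \<Rightarrow> real list set" where
  "datasets n L U = {x. length x = n \<and> (\<forall>i<n. L \<le> x ! i \<and> x ! i \<le> U)}"

definition hdist :: "real list \<Rightarrow> real list \<Rightarrow> nat" where
  "hdist x y = card {i. i < length x \<and> x ! i \<noteq> y ! i}"

definition mean :: "real list \<Rightarrow> real" where
  "mean x = (\<Sum>i<length x. x ! i) / real (length x)"

definition variance :: "real list \<Rightarrow> real" where
  "variance x = (\<Sum>i<length x. (x ! i - mean x)\<^sup>2) / real (length x)"

definition local_sens :: "(real list \<Rightarrow> real) \<Rightarrow> nat \<Rightarrow> real \<Rightarrow> real \<Rightarrow> real list \<Rightarrow> real" where
  "local_sens f n L U x = (SUP y \<in> {y \<in> datasets n L U. hdist x y = 1}. \<bar>f x - f y\<bar>)"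

definition smooth_sens :: "(real list \<Rightarrow> real) \<Rightarrow> real \<Rightarrow> nat \<Rightarrow> real \<Rightarrow> real \<Rightarrow> real list \<Rightarrow> real" where
  "smooth_sens f \<beta> n L U x =
     (SUP y \<in> datasets n L U. local_sens f n L U y * exp (- \<beta> * real (hdist x y)))"

text \<open>State: natural-number registers (used for counters / addresses) and a
  real-valued memory (indirectly addressable via natural-number expressions).\<close>
type_synonym state = "(nat \<Rightarrow> nat) \<times> (nat \<Rightarrow> real)"

datatype aexp = NConst nat | NReg nat | NAdd aexp aexp | NSub aexp aexp | NMul aexp aexp

datatype rexp = RConst int | RLoad aexp | RofNat aexp
  | RAdd rexp rexp | RSub rexp rexp | RMul rexp rexp | RDiv rexp rexp
  | RExp rexp | RSqrt rexp

datatype bexp = BRLess rexp rexp | BNLess aexp aexp | BNot bexp | BAnd bexp bexp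

datatype com = SKIP | NAssign nat aexp | RStore aexp rexp | Seq com com
  | If bexp com com | While bexp com

fun aval :: "aexp \<Rightarrow> (nat \<Rightarrow> nat) \<Rightarrow> nat" where
  "aval (NConst k) I = k"
| "aval (NReg i) I = I i"
| "aval (NAdd a b) I = aval a I + aval b I"
| "aval (NSub a b) I = aval a I - aval b I"
| "aval (NMul a b) I = aval a I * aval b I"

fun rval :: "rexp \<Rightarrow> state \<Rightarrow> real" where
  "rval (RConst k) s = of_int k"
| "rval (RLoad a) s = snd s (aval a (fst s))"
| "rval (RofNat a) s = real (aval a (fst s))"
| "rval (RAdd e1 e2) s = rval e1 s + rval e2 s"
| "rval (RSub e1 e2) s = rval e1 s - rval e2 s"
| "rval (RMul e1 e2) s = rval e1 s * rval e2 s"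
| "rval (RDiv e1 e2) s = rval e1 s / rval e2 s"
| "rval (RExp e) s = exp (rval e s)"
| "rval (RSqrt e) s = sqrt (rval e s)"

fun bval :: "bexp \<Rightarrow> state \<Rightarrow> bool" where
  "bval (BRLess e1 e2) s = (rval e1 s < rval e2 s)"
| "bval (BNLess a b) s = (aval a (fst s) < aval b (fst s))"
| "bval (BNot b) s = (\<not> bval b s)"
| "bval (BAnd b1 b2) s = (bval b1 s \<and> bval b2 s)"

text \<open>Big-step semantics; \<open>big c s t s'\<close>: c started in s terminates in s' after t steps.\<close>
inductive big :: "com \<Rightarrow> state \<Rightarrow> nat \<Rightarrow> state \<Rightarrow> bool" where
  Skip: "big SKIP s 1 s"
| NAssign: "big (NAssign i a) (I, R) 1 (I(i := aval a I), R)"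
| RStore: "big (RStore a e) (I, R) 1 (I, R(aval a I := rval e (I, R)))"
| Seq: "big c1 s t1 s' \<Longrightarrow> big c2 s' t2 s'' \<Longrightarrow> big (Seq c1 c2) s (t1 + t2) s''"
| IfT: "bval b s \<Longrightarrow> big c1 s t s' \<Longrightarrow> big (If b c1 c2) s (t + 1) s'"
| IfF: "\<not> bval b s \<Longrightarrow> big c2 s t s' \<Longrightarrow> big (If b c1 c2) s (t + 1) s'"
| WhileF: "\<not> bval b s \<Longrightarrow> big (While b c) s 1 s"
| WhileT: "bval b s \<Longrightarrow> big c s t1 s' \<Longrightarrow> big (While b c) s' t2 s'' \<Longrightarrow>
           big (While b c) s (t1 + t2 + 1) s''"

text \<open>Input encoding: nat register 0 holds n; real memory holds L, U, \<beta> at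
  addresses 0, 1, 2 and the dataset entry x!i at address 3+i; everything else 0.
  The output is read from real memory address 0.\<close>
definition init_state :: "nat \<Rightarrow> real \<Rightarrow> real \<Rightarrow> real \<Rightarrow> real list \<Rightarrow> state" where
  "init_state n L U \<beta> x =
     ((\<lambda>i. if i = 0 then n else 0),
      (\<lambda>a. if a = 0 then L else if a = 1 then U else if a = 2 then \<beta>
            else if 3 \<le> a \<and> a - 3 < length x then x ! (a - 3) else 0))"

end

theory Submission
  imports Defs
begin

text \<open>Replacing the entry \<open>y ! j\<close> by \<open>b\<close> changes the variance by
  \<open>(n - 1) / n\<^sup>2 * ((b - m)\<^sup>2 - (y ! j - m)\<^sup>2)\<close>, where \<open>m\<close> is the mean of the other entries.
  Hence the local sensitivity at \<open>y\<close> is \<open>(n - 1) / n\<^sup>2\<close> times the largest, over \<open>j\<close>, of the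
  maximal such jump over \<open>b \<in> [L, U]\<close>.
  For a dataset \<open>y\<close> at distance \<open>d\<close> from \<open>x\<close>, either \<open>y ! j = x ! j\<close> and the other entries
  differ in \<open>d\<close> places, or \<open>y ! j\<close> differs as well and only \<open>d - 1\<close> other entries do; in both
  cases \<open>m\<close> ranges over an interval whose endpoints are reached by moving the largest
  \<open>x ! i - L\<close> down to \<open>L\<close> or the largest \<open>U - x ! i\<close> up to \<open>U\<close>. The maximal jump is a maximum
  of functions of \<open>m\<close> that are affine or convex, so it is largest at an endpoint. The smooth
  sensitivity is therefore the maximum of \<open>O(n\<^sup>2)\<close> explicit candidates indexed by \<open>d\<close> and \<open>j\<close>.
  After ranking the data by counting (\<open>O(n\<^sup>2)\<close> steps), the sums of the \<open>d\<close> largest values take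
  \<open>O(n)\<close> steps for each \<open>d\<close>, so a unit-cost real RAM computes the maximum in \<open>O(n\<^sup>2)\<close> steps.\<close>

section \<open>Sums of the largest weights\<close>

definition ranks_before :: "(nat \<Rightarrow> real) \<Rightarrow> nat \<Rightarrow> nat \<Rightarrow> bool" where
  "ranks_before w l i \<longleftrightarrow> w i < w l \<or> (w l = w i \<and> l < i)"

text \<open>The position of \<open>i\<close> when the indices below \<open>n\<close> are sorted by decreasing weight,
  ties broken by index.\<close>
definition wrank :: "nat \<Rightarrow> (nat \<Rightarrow> real) \<Rightarrow> nat \<Rightarrow> nat" where
  "wrank n w i = card {l. l < n \<and> ranks_before w l i}"

definition top_sum :: "nat \<Rightarrow> (nat \<Rightarrow> real) \<Rightarrow> nat \<Rightarrow> real" where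
  "top_sum n w r = (\<Sum>i<n. if wrank n w i < r then w i else 0)"

text \<open>The largest sum of \<open>k\<close> weights with indices below \<open>n\<close> other than \<open>j\<close>.\<close>
definition top_sum_except :: "nat \<Rightarrow> (nat \<Rightarrow> real) \<Rightarrow> nat \<Rightarrow> nat \<Rightarrow> real" where
  "top_sum_except n w k j =
     (if wrank n w j < k then top_sum n w (Suc k) - w j else top_sum n w k)"

lemma ranks_before_trans: "ranks_before w a b \<Longrightarrow> ranks_before w b c \<Longrightarrow> ranks_before w a c"
  unfolding ranks_before_def by auto

lemma ranks_before_irrefl: "\<not> ranks_before w a a"
  unfolding ranks_before_def by auto

lemma ranks_before_total: "a \<noteq> b \<Longrightarrow> ranks_before w a b \<or> ranks_before w b a"
  unfolding ranks_before_def by auto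

lemma wrank_strict_mono:
  assumes "ranks_before w l i" "l < n"
  shows "wrank n w l < wrank n w i"
proof -
  have "{l'. l' < n \<and> ranks_before w l' l} \<subset> {l'. l' < n \<and> ranks_before w l' i}"
    using assms ranks_before_trans ranks_before_irrefl by blast
  then show ?thesis unfolding wrank_def by (intro psubset_card_mono) auto
qed

lemma wrank_less:
  assumes "i < n" shows "wrank n w i < n"
proof -
  have "{l. l < n \<and> ranks_before w l i} \<subseteq> {..<n} - {i}" using ranks_before_irrefl by auto
  then have "wrank n w i \<le> card ({..<n} - {i})" unfolding wrank_def by (intro card_mono) auto
  then show ?thesis using assms by simp
qed

lemma inj_on_wrank: "inj_on (wrank n w) {..<n}"
proof (rule inj_onI)
  fix a b assume "a \<in> {..<n}" "b \<in> {..<n}" "wrank n w a = wrank n w b"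
  then show "a = b"
    using ranks_before_total wrank_strict_mono[of w a b n] wrank_strict_mono[of w b a n]
    by fastforce
qed

lemma wrank_image: "wrank n w ` {..<n} = {..<n}"
proof -
  have "card (wrank n w ` {..<n}) = n" using inj_on_wrank card_image by fastforce
  then show ?thesis using wrank_less by (intro card_subset_eq) auto
qed

lemma card_wrank_less: "card {i. i < n \<and> wrank n w i < r} = min r n"
proof -
  let ?T = "{i. i < n \<and> wrank n w i < r}"
  have "inj_on (wrank n w) ?T" using inj_on_wrank by (rule inj_on_subset) auto
  then have "card ?T = card (wrank n w ` ?T)" by (simp add: card_image)
  also have "wrank n w ` ?T = {..<min r n}"
  proof
    show "wrank n w ` ?T \<subseteq> {..<min r n}" using wrank_less by auto
    show "{..<min r n} \<subseteq> wrank n w ` ?T"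
    proof
      fix m assume m: "m \<in> {..<min r n}"
      then have "m \<in> wrank n w ` {..<n}" using wrank_image by auto
      then obtain i where "i < n" "m = wrank n w i" by auto
      then show "m \<in> wrank n w ` ?T" using m by auto
    qed
  qed
  finally show ?thesis by simp
qed

lemma weight_le_if_wrank_less:
  assumes "i < n" "l < n" "wrank n w i < wrank n w l"
  shows "w l \<le> w i"
  using assms wrank_strict_mono[of w l i n] unfolding ranks_before_def by fastforce

lemma top_sum_eq_sum: "top_sum n w r = sum w {i. i < n \<and> wrank n w i < r}"
  unfolding top_sum_def by (simp add: sum.inter_filter[symmetric] lessThan_def)

lemma sum_le_top_sum:
  assumes nonneg: "\<forall>i<n. 0 \<le> w i" and D: "D \<subseteq> {..<n}" and card_D: "card D \<le> min r n"
  shows "sum w D \<le> top_sum n w r"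
proof -
  define T where "T = {i. i < n \<and> wrank n w i < r}"
  have fin: "finite D" "finite T" using D finite_subset unfolding T_def by auto
  have "card (D - T) \<le> card (T - D)"
    using card_le_sym_Diff[OF fin] card_D card_wrank_less[of n w r] unfolding T_def by simp
  then obtain f where f: "f ` (D - T) \<subseteq> T - D" "inj_on f (D - T)"
    using card_le_inj fin by (metis finite_Diff)
  \<comment> \<open>exchange argument: every index outside the top set is outweighed by its partner inside\<close>
  have "sum w (D - T) \<le> sum (w \<circ> f) (D - T)"
  proof (rule sum_mono)
    fix d assume d: "d \<in> D - T"
    then have "f d \<in> T - D" using f by auto
    then show "w d \<le> (w \<circ> f) d"
      using d D weight_le_if_wrank_less[of "f d" n d w] unfolding T_def by auto
  qed
  also have "\<dots> = sum w (f ` (D - T))" using f(2) by (simp add: sum.reindex)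
  also have "\<dots> \<le> sum w (T - D)"
    using f(1) fin nonneg unfolding T_def by (intro sum_mono2) auto
  finally have "sum w (D - T) \<le> sum w (T - D)" .
  moreover have "sum w D = sum w (D \<inter> T) + sum w (D - T)" "sum w T = sum w (D \<inter> T) + sum w (T - D)"
    using fin by (metis sum.Int_Diff, metis sum.Int_Diff inf_commute)
  ultimately show ?thesis unfolding top_sum_eq_sum T_def by linarith
qed

lemma sum_le_top_sum_except:
  assumes nonneg: "\<forall>i<n. 0 \<le> w i" and j: "j < n" and k: "k < n"
    and D: "D \<subseteq> {..<n} - {j}" and card_D: "card D \<le> k"
  shows "sum w D \<le> top_sum_except n w k j"
proof (cases "wrank n w j < k")
  case True
  have fin: "finite D" and "j \<notin> D" using D finite_subset by auto
  then have "card (insert j D) \<le> min (Suc k) n" using card_D k by auto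
  then have "sum w (insert j D) \<le> top_sum n w (Suc k)"
    using sum_le_top_sum[OF nonneg, of "insert j D" "Suc k"] D j by auto
  then show ?thesis using True fin \<open>j \<notin> D\<close> unfolding top_sum_except_def by auto
next
  case False
  then show ?thesis using sum_le_top_sum[OF nonneg, of D k] D card_D k
    unfolding top_sum_except_def by auto
qed

lemma top_sum_except_attained:
  assumes "j < n" "k < n"
  obtains T where "T \<subseteq> {..<n} - {j}" "card T = k" "sum w T = top_sum_except n w k j"
proof (cases "wrank n w j < k")
  case True
  let ?T = "{i. i < n \<and> wrank n w i < Suc k} - {j}"
  have "j \<in> {i. i < n \<and> wrank n w i < Suc k}" using True assms by auto
  then have "card ?T = k" "sum w ?T = top_sum_except n w k j"
    using True assms card_wrank_less[of n w "Suc k"]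
    by (simp_all add: top_sum_except_def top_sum_eq_sum sum_diff1)
  then show ?thesis using that[of ?T] by auto
next
  case False
  let ?T = "{i. i < n \<and> wrank n w i < k}"
  have "j \<notin> ?T" using False by auto
  then show ?thesis
    using that[of ?T] False assms card_wrank_less[of n w k]
    unfolding top_sum_except_def top_sum_eq_sum by auto
qed

section \<open>Variance under the replacement of one entry\<close>

lemma datasetsD:
  "y \<in> datasets n L U \<Longrightarrow> length y = n"
  "y \<in> datasets n L U \<Longrightarrow> i < n \<Longrightarrow> L \<le> y ! i"
  "y \<in> datasets n L U \<Longrightarrow> i < n \<Longrightarrow> y ! i \<le> U"
  unfolding datasets_def by auto

lemma datasets_list_update:
  "y \<in> datasets n L U \<Longrightarrow> L \<le> b \<Longrightarrow> b \<le> U \<Longrightarrow> y[j := b] \<in> datasets n L U"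
  unfolding datasets_def by (cases "j < length y") (auto simp: nth_list_update list_update_beyond)

definition mean_others :: "nat \<Rightarrow> real list \<Rightarrow> nat \<Rightarrow> real" where
  "mean_others n y j = ((\<Sum>i<n. y ! i) - y ! j) / (real n - 1)"

definition var_scale :: "nat \<Rightarrow> real" where
  "var_scale n = (real n - 1) / (real n)\<^sup>2"

lemma var_scale_nonneg: "1 \<le> n \<Longrightarrow> 0 \<le> var_scale n"
  unfolding var_scale_def by simp

lemma sum_nth_list_update:
  assumes "j < n" "length y = n"
  shows "(\<Sum>i<n. g (y[j := b] ! i)) = (\<Sum>i<n. g (y ! i)) - g (y ! j) + (g b :: real)"
proof -
  have "(\<Sum>i<n. g (y[j := b] ! i)) = (\<Sum>i<n. g (y ! i) + (if i = j then g b - g (y ! j) else 0))"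
    using assms by (intro sum.cong) auto
  also have "\<dots> = (\<Sum>i<n. g (y ! i)) + (g b - g (y ! j))"
    using assms by (simp add: sum.distrib)
  finally show ?thesis by simp
qed

lemma variance_eq_moments:
  assumes "length y = n" "0 < n"
  shows "variance y = (\<Sum>i<n. (y ! i)\<^sup>2) / real n - ((\<Sum>i<n. y ! i) / real n)\<^sup>2"
proof -
  define \<mu> where "\<mu> = (\<Sum>i<n. y ! i) / real n"
  have "mean y = \<mu>" unfolding mean_def \<mu>_def using assms by simp
  have "(\<Sum>i<n. (y ! i - \<mu>)\<^sup>2) = (\<Sum>i<n. (y ! i)\<^sup>2) - 2 * \<mu> * (\<Sum>i<n. y ! i) + real n * \<mu>\<^sup>2"
    by (simp add: power2_diff sum_subtractf sum.distrib sum_distrib_left algebra_simps)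
  also have "(\<Sum>i<n. y ! i) = real n * \<mu>" unfolding \<mu>_def using assms by simp
  finally have "(\<Sum>i<n. (y ! i - \<mu>)\<^sup>2) = (\<Sum>i<n. (y ! i)\<^sup>2) - real n * \<mu>\<^sup>2"
    by (simp add: power2_eq_square)
  then show ?thesis
    unfolding variance_def \<open>mean y = \<mu>\<close> \<mu>_def[symmetric] using assms by (simp add: field_simps)
qed

lemma moments_update_identity:
  fixes S Q a b N :: real
  assumes "N \<ge> 2"
  shows "((Q - a\<^sup>2 + b\<^sup>2) / N - ((S - a + b) / N)\<^sup>2) - (Q / N - (S / N)\<^sup>2)
     = (N - 1) / N\<^sup>2 * ((b - (S - a) / (N - 1))\<^sup>2 - (a - (S - a) / (N - 1))\<^sup>2)"
proof -
  define m where "m = (S - a) / (N - 1)"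
  have m: "(N - 1) * m = S - a" unfolding m_def using assms by simp
  have "(b - m)\<^sup>2 - (a - m)\<^sup>2 = (b - a) * (b + a - 2 * m)"
    by (simp add: power2_eq_square algebra_simps)
  then have "(N - 1) / N\<^sup>2 * ((b - m)\<^sup>2 - (a - m)\<^sup>2) = ((N - 1) * ((b - a) * (b + a - 2 * m))) / N\<^sup>2"
    by simp
  also have "\<dots> = (b - a) * ((N - 1) * (b + a) - 2 * ((N - 1) * m)) / N\<^sup>2"
    by (simp add: algebra_simps)
  also have "\<dots> = ((Q - a\<^sup>2 + b\<^sup>2) / N - ((S - a + b) / N)\<^sup>2) - (Q / N - (S / N)\<^sup>2)"
    unfolding m using assms by (simp add: field_simps power2_eq_square)
  finally show ?thesis unfolding m_def by simp
qed

lemma variance_list_update: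
  assumes "length y = n" "2 \<le> n" "j < n"
  shows "variance (y[j := b]) - variance y
       = var_scale n * ((b - mean_others n y j)\<^sup>2 - (y ! j - mean_others n y j)\<^sup>2)"
proof -
  have "0 < n" "length (y[j := b]) = n" using assms by auto
  moreover have "(\<Sum>i<n. y[j := b] ! i) = (\<Sum>i<n. y ! i) - y ! j + b"
    "(\<Sum>i<n. (y[j := b] ! i)\<^sup>2) = (\<Sum>i<n. (y ! i)\<^sup>2) - (y ! j)\<^sup>2 + b\<^sup>2"
    using sum_nth_list_update[OF assms(3,1), of "\<lambda>x. x"] sum_nth_list_update[OF assms(3,1), of "\<lambda>x. x\<^sup>2"]
    by simp_all
  ultimately show ?thesis
    using assms moments_update_identity[of "real n"]
    by (simp add: variance_eq_moments mean_others_def var_scale_def)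
qed

lemma mean_others_between:
  assumes y: "y \<in> datasets n L U" and n: "2 \<le> n" and j: "j < n"
  shows "L \<le> mean_others n y j" "mean_others n y j \<le> U"
proof -
  have others: "(\<Sum>i<n. y ! i) - y ! j = (\<Sum>i\<in>{..<n} - {j}. y ! i)"
    using j by (simp add: sum_diff1)
  have card: "real (card ({..<n} - {j})) = real n - 1" using j n by simp
  have "(\<Sum>i\<in>{..<n} - {j}. L) \<le> (\<Sum>i\<in>{..<n} - {j}. y ! i)"
    using datasetsD(2)[OF y] by (intro sum_mono) auto
  moreover have "(\<Sum>i\<in>{..<n} - {j}. y ! i) \<le> (\<Sum>i\<in>{..<n} - {j}. U)"
    using datasetsD(3)[OF y] by (intro sum_mono) auto
  moreover have "0 < real n - 1" using n by simp
  ultimately show "L \<le> mean_others n y j" "mean_others n y j \<le> U"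
    unfolding mean_others_def others using card by (simp_all add: field_simps)
qed

section \<open>Local sensitivity of the variance\<close>

definition max_sqdist :: "real \<Rightarrow> real \<Rightarrow> real \<Rightarrow> real" where
  "max_sqdist L U m = max ((L - m)\<^sup>2) ((U - m)\<^sup>2)"

text \<open>For \<open>L \<le> m \<le> U\<close> this is the largest \<open>\<bar>(b - m)\<^sup>2 - (a - m)\<^sup>2\<bar>\<close> over \<open>b \<in> [L, U]\<close>:
  \<open>(b - m)\<^sup>2\<close> is maximal at an endpoint and vanishes at \<open>b = m\<close>.\<close>
definition max_jump :: "real \<Rightarrow> real \<Rightarrow> real \<Rightarrow> real \<Rightarrow> real" where
  "max_jump L U a m = max (max ((L - m)\<^sup>2 - (a - m)\<^sup>2) ((U - m)\<^sup>2 - (a - m)\<^sup>2)) ((a - m)\<^sup>2)"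

lemma sqdist_le_max_sqdist:
  assumes "L \<le> b" "b \<le> U" shows "(b - m)\<^sup>2 \<le> max_sqdist L U m"
proof (cases "m \<le> b")
  case True
  then have "(b - m)\<^sup>2 \<le> (U - m)\<^sup>2" using assms by (intro power_mono) auto
  then show ?thesis unfolding max_sqdist_def by auto
next
  case False
  then have "(m - b)\<^sup>2 \<le> (m - L)\<^sup>2" using assms by (intro power_mono) auto
  then show ?thesis unfolding max_sqdist_def by (auto simp: power2_commute)
qed

lemma abs_jump_le_max_jump:
  assumes "L \<le> b" "b \<le> U"
  shows "\<bar>(b - m)\<^sup>2 - (a - m)\<^sup>2\<bar> \<le> max_jump L U a m"
proof -
  have "\<bar>B - A\<bar> \<le> max (max (X - A) (Y - A)) A" if "0 \<le> B" "B \<le> max X Y" for A B X Y :: real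
    using that by (auto simp: max_def abs_if)
  then show ?thesis
    using sqdist_le_max_sqdist[OF assms, of m] unfolding max_jump_def max_sqdist_def by simp
qed

lemma max_jump_nonneg: "0 \<le> max_jump L U a m"
  unfolding max_jump_def by (simp add: le_max_iff_disj)

lemma max_jump_le_max_sqdist:
  assumes "L \<le> a" "a \<le> U" shows "max_jump L U a m \<le> max_sqdist L U m"
proof -
  have "max (max (X - A) (Y - A)) A \<le> max X Y" if "0 \<le> A" "A \<le> max X Y" for A X Y :: real
    using that by (auto simp: max_def)
  then show ?thesis
    using sqdist_le_max_sqdist[OF assms, of m] unfolding max_jump_def max_sqdist_def by simp
qed

lemma mult_max_le_iff:
  fixes c a b z :: real
  assumes "0 \<le> c" shows "c * max a b \<le> z \<longleftrightarrow> c * a \<le> z \<and> c * b \<le> z"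
  using assms by (simp add: max_mult_distrib_left)

lemma max_jump_self: "max_jump L U m m = max_sqdist L U m"
  unfolding max_jump_def max_sqdist_def by (simp add: max_def)

lemma hdist_list_update_self:
  assumes "j < length y" "b \<noteq> y ! j"
  shows "hdist y (y[j := b]) = 1"
proof -
  have "{i. i < length y \<and> y ! i \<noteq> y[j := b] ! i} = {j}"
    using assms by (auto simp: nth_list_update)
  then show ?thesis unfolding hdist_def by simp
qed

lemma hdist_eq_1_imp_list_update:
  assumes y: "y \<in> datasets n L U" and z: "z \<in> datasets n L U" and h: "hdist y z = 1"
  obtains j where "j < n" "z = y[j := z ! j]"
proof -
  have len: "length y = n" "length z = n" using y z datasetsD by auto
  then have "card {i. i < n \<and> y ! i \<noteq> z ! i} = 1" using h unfolding hdist_def by simp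
  then obtain j where j: "{i. i < n \<and> y ! i \<noteq> z ! i} = {j}" by (rule card_1_singletonE)
  have "j \<in> {i. i < n \<and> y ! i \<noteq> z ! i}" using j by simp
  then have "j < n" by simp
  have same: "z ! i = y ! i" if "i < n" "i \<noteq> j" for i
  proof -
    have "i \<notin> {i. i < n \<and> y ! i \<noteq> z ! i}" using j that by simp
    then show ?thesis using that by simp
  qed
  have "z = y[j := z ! j]"
    by (rule nth_equalityI) (use len same \<open>j < n\<close> in \<open>auto simp: nth_list_update\<close>)
  with \<open>j < n\<close> show ?thesis using that by blast
qed

lemma exists_neighbor:
  assumes y: "y \<in> datasets n L U" and n: "1 \<le> n" and LU: "L < U"
  shows "\<exists>z \<in> datasets n L U. hdist y z = 1"
proof -
  define b where "b = (if y ! 0 = L then U else L)"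
  have "L \<le> b" "b \<le> U" "b \<noteq> y ! 0" using LU unfolding b_def by auto
  then show ?thesis
    using datasets_list_update[OF y] hdist_list_update_self[of 0 y b] datasetsD(1)[OF y] n by auto
qed

lemma abs_variance_diff_le_max_jump:
  assumes y: "y \<in> datasets n L U" and n: "2 \<le> n" and z: "z \<in> datasets n L U"
    and h: "hdist y z = 1"
  obtains j where "j < n"
    "\<bar>variance y - variance z\<bar> \<le> var_scale n * max_jump L U (y ! j) (mean_others n y j)"
proof -
  obtain j where j: "j < n" "z = y[j := z ! j]" using hdist_eq_1_imp_list_update[OF y z h] .
  have "\<bar>variance y - variance z\<bar> = \<bar>variance (y[j := z ! j]) - variance y\<bar>"
    using j(2) by (simp add: abs_minus_commute)
  also have "\<dots> = var_scale n * \<bar>(z ! j - mean_others n y j)\<^sup>2 - (y ! j - mean_others n y j)\<^sup>2\<bar>"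
    unfolding variance_list_update[OF datasetsD(1)[OF y] n j(1)]
    using var_scale_nonneg[of n] n by (simp add: abs_mult)
  also have "\<dots> \<le> var_scale n * max_jump L U (y ! j) (mean_others n y j)"
    using abs_jump_le_max_jump datasetsD(2,3)[OF z j(1)] var_scale_nonneg[of n] n
    by (intro mult_left_mono) auto
  finally show ?thesis using that j by blast
qed

lemma bdd_above_variance_neighbors:
  assumes y: "y \<in> datasets n L U" and n: "2 \<le> n"
  shows "bdd_above ((\<lambda>z. \<bar>variance y - variance z\<bar>) ` {z \<in> datasets n L U. hdist y z = 1})"
proof -
  have "\<bar>variance y - variance z\<bar> \<le> (\<Sum>j<n. var_scale n * max_jump L U (y ! j) (mean_others n y j))"
    if z: "z \<in> datasets n L U" "hdist y z = 1" for z
  proof -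
    obtain j where j: "j < n"
      and bound: "\<bar>variance y - variance z\<bar> \<le> var_scale n * max_jump L U (y ! j) (mean_others n y j)"
      using abs_variance_diff_le_max_jump[OF y n z] .
    have "var_scale n * max_jump L U (y ! j) (mean_others n y j)
        \<le> (\<Sum>j<n. var_scale n * max_jump L U (y ! j) (mean_others n y j))"
      using j var_scale_nonneg[of n] max_jump_nonneg n by (intro member_le_sum) auto
    with bound show ?thesis by linarith
  qed
  then show ?thesis unfolding bdd_above_def by blast
qed

lemma local_sens_variance_le:
  assumes y: "y \<in> datasets n L U" and n: "2 \<le> n" and LU: "L < U"
    and B: "\<And>j. j < n \<Longrightarrow> var_scale n * max_jump L U (y ! j) (mean_others n y j) \<le> B"
  shows "local_sens variance n L U y \<le> B"
  unfolding local_sens_def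
proof (rule cSUP_least)
  show "{z \<in> datasets n L U. hdist y z = 1} \<noteq> {}" using exists_neighbor[OF y _ LU] n by auto
  fix z assume "z \<in> {z \<in> datasets n L U. hdist y z = 1}"
  then obtain j where "j < n"
    and "\<bar>variance y - variance z\<bar> \<le> var_scale n * max_jump L U (y ! j) (mean_others n y j)"
    using abs_variance_diff_le_max_jump[OF y n] by blast
  with B show "\<bar>variance y - variance z\<bar> \<le> B" by fastforce
qed

lemma abs_variance_diff_le_local_sens:
  assumes y: "y \<in> datasets n L U" and n: "2 \<le> n" and z: "z \<in> datasets n L U"
    and h: "hdist y z = 1"
  shows "\<bar>variance y - variance z\<bar> \<le> local_sens variance n L U y"
  unfolding local_sens_def using z h bdd_above_variance_neighbors[OF y n] by (intro cSUP_upper) auto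

lemma local_sens_variance_nonneg:
  assumes y: "y \<in> datasets n L U" and n: "2 \<le> n" and LU: "L < U"
  shows "0 \<le> local_sens variance n L U y"
proof -
  obtain z where "z \<in> datasets n L U" "hdist y z = 1" using exists_neighbor[OF y _ LU] n by auto
  then have "\<bar>variance y - variance z\<bar> \<le> local_sens variance n L U y"
    by (rule abs_variance_diff_le_local_sens[OF y n])
  then show ?thesis by linarith
qed

lemma local_sens_variance_ge_jump:
  assumes y: "y \<in> datasets n L U" and n: "2 \<le> n" and LU: "L < U" and j: "j < n"
    and b: "L \<le> b" "b \<le> U"
  shows "var_scale n * \<bar>(b - mean_others n y j)\<^sup>2 - (y ! j - mean_others n y j)\<^sup>2\<bar>
           \<le> local_sens variance n L U y"
proof (cases "b = y ! j")
  case True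
  then show ?thesis using local_sens_variance_nonneg[OF y n LU] by simp
next
  case False
  have len: "length y = n" using datasetsD(1)[OF y] .
  have "var_scale n * \<bar>(b - mean_others n y j)\<^sup>2 - (y ! j - mean_others n y j)\<^sup>2\<bar>
      = \<bar>var_scale n * ((b - mean_others n y j)\<^sup>2 - (y ! j - mean_others n y j)\<^sup>2)\<bar>"
    using var_scale_nonneg[of n] n by (simp add: abs_mult)
  also have "\<dots> = \<bar>variance y - variance (y[j := b])\<bar>"
    unfolding variance_list_update[OF len n j, symmetric] by (rule abs_minus_commute)
  also have "\<dots> \<le> local_sens variance n L U y"
    using abs_variance_diff_le_local_sens[OF y n datasets_list_update[OF y b]]
      hdist_list_update_self[of j y b] False j len by simp
  finally show ?thesis .
qed

lemma local_sens_variance_ge: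
  assumes y: "y \<in> datasets n L U" and n: "2 \<le> n" and LU: "L < U" and j: "j < n"
  shows "var_scale n * max_jump L U (y ! j) (mean_others n y j) \<le> local_sens variance n L U y"
proof -
  let ?m = "mean_others n y j" and ?a = "y ! j" and ?LS = "local_sens variance n L U y"
  have K: "0 \<le> var_scale n" using var_scale_nonneg n by auto
  have jump: "var_scale n * ((b - ?m)\<^sup>2 - (?a - ?m)\<^sup>2) \<le> ?LS" if "L \<le> b" "b \<le> U" for b
  proof -
    have "var_scale n * ((b - ?m)\<^sup>2 - (?a - ?m)\<^sup>2) \<le> var_scale n * \<bar>(b - ?m)\<^sup>2 - (?a - ?m)\<^sup>2\<bar>"
      using K by (intro mult_left_mono) auto
    then show ?thesis using local_sens_variance_ge_jump[OF y n LU j that] by linarith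
  qed
  have "var_scale n * (?a - ?m)\<^sup>2 \<le> ?LS"
    using local_sens_variance_ge_jump[OF y n LU j mean_others_between[OF y n j]] by simp
  then show ?thesis
    using jump[OF order_refl less_imp_le[OF LU]] jump[OF less_imp_le[OF LU] order_refl] K
    unfolding max_jump_def by (simp add: mult_max_le_iff)
qed

section \<open>Smooth sensitivity of the variance\<close>

text \<open>The extreme values of \<open>mean_others n y j\<close> over datasets \<open>y\<close> that agree with \<open>x\<close> at
  \<open>j\<close> and elsewhere differ from \<open>x\<close> in at most \<open>k\<close> positions: move the \<open>k\<close> largest
  \<open>x ! i - L\<close> down to \<open>L\<close>, resp. the \<open>k\<close> largest \<open>U - x ! i\<close> up to \<open>U\<close>.\<close>
definition mean_others_lo :: "nat \<Rightarrow> real \<Rightarrow> real list \<Rightarrow> nat \<Rightarrow> nat \<Rightarrow> real" where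
  "mean_others_lo n L x k j =
     ((\<Sum>i<n. x ! i) - x ! j - top_sum_except n (\<lambda>i. x ! i - L) k j) / (real n - 1)"

definition mean_others_hi :: "nat \<Rightarrow> real \<Rightarrow> real list \<Rightarrow> nat \<Rightarrow> nat \<Rightarrow> real" where
  "mean_others_hi n U x k j =
     ((\<Sum>i<n. x ! i) - x ! j + top_sum_except n (\<lambda>i. U - x ! i) k j) / (real n - 1)"

definition candidate_terms :: "real \<Rightarrow> real \<Rightarrow> real \<Rightarrow> real \<Rightarrow> real \<Rightarrow> real \<Rightarrow> real list" where
  "candidate_terms L U E E' a m =
     [E * ((L - m)\<^sup>2 - (a - m)\<^sup>2), E * ((U - m)\<^sup>2 - (a - m)\<^sup>2), E * (a - m)\<^sup>2,
      E' * (L - m)\<^sup>2, E' * (U - m)\<^sup>2]"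

text \<open>The weight \<open>exp (- \<beta> * k)\<close> accounts for datasets at distance \<open>k\<close> that keep \<open>x ! j\<close>,
  the weight \<open>exp (- \<beta> * (k + 1))\<close> for those that also change it.\<close>
definition candidates :: "nat \<Rightarrow> real \<Rightarrow> real \<Rightarrow> real \<Rightarrow> real list \<Rightarrow> nat \<Rightarrow> nat \<Rightarrow> real list" where
  "candidates n L U \<beta> x k j =
     candidate_terms L U (exp (- \<beta> * real k)) (exp (- \<beta> * real (Suc k))) (x ! j) (mean_others_lo n L x k j)
   @ candidate_terms L U (exp (- \<beta> * real k)) (exp (- \<beta> * real (Suc k))) (x ! j) (mean_others_hi n U x k j)"

definition max_candidate :: "nat \<Rightarrow> real \<Rightarrow> real \<Rightarrow> real \<Rightarrow> real list \<Rightarrow> real" where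
  "max_candidate n L U \<beta> x = Max (insert 0 (\<Union>k<n. \<Union>j<n. set (candidates n L U \<beta> x k j)))"

lemma candidate_terms_le_iff:
  assumes "0 \<le> E" "0 \<le> E'"
  shows "(\<forall>v \<in> set (candidate_terms L U E E' a m). v \<le> B)
     \<longleftrightarrow> E * max_jump L U a m \<le> B \<and> E' * max_sqdist L U m \<le> B"
  using assms unfolding candidate_terms_def max_jump_def max_sqdist_def
  by (simp add: mult_max_le_iff)

lemma candidates_le_max_candidate:
  assumes "k < n" "j < n" "v \<in> set (candidates n L U \<beta> x k j)"
  shows "v \<le> max_candidate n L U \<beta> x"
  unfolding max_candidate_def using assms by (intro Max_ge) auto

lemma discounted_le_max_candidate:
  assumes "k < n" "j < n" "m \<in> {mean_others_lo n L x k j, mean_others_hi n U x k j}"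
  shows "exp (- \<beta> * real k) * max_jump L U (x ! j) m \<le> max_candidate n L U \<beta> x"
    "exp (- \<beta> * real (Suc k)) * max_sqdist L U m \<le> max_candidate n L U \<beta> x"
proof -
  have "\<forall>v \<in> set (candidate_terms L U (exp (- \<beta> * real k)) (exp (- \<beta> * real (Suc k))) (x ! j) m).
      v \<le> max_candidate n L U \<beta> x"
    using candidates_le_max_candidate[OF assms(1,2)] assms(3) unfolding candidates_def by auto
  then show "exp (- \<beta> * real k) * max_jump L U (x ! j) m \<le> max_candidate n L U \<beta> x"
    "exp (- \<beta> * real (Suc k)) * max_sqdist L U m \<le> max_candidate n L U \<beta> x"
    by (simp_all only: candidate_terms_le_iff[OF exp_ge_zero exp_ge_zero])
qed

lemma sqdist_le_endpoints:
  fixes a m l h :: real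
  assumes "l \<le> m" "m \<le> h"
  shows "(a - m)\<^sup>2 \<le> max ((a - l)\<^sup>2) ((a - h)\<^sup>2)"
proof (cases "m \<le> a")
  case True
  then have "(a - m)\<^sup>2 \<le> (a - l)\<^sup>2" using assms by (intro power_mono) auto
  then show ?thesis by simp
next
  case False
  then have "(m - a)\<^sup>2 \<le> (h - a)\<^sup>2" using assms by (intro power_mono) auto
  then show ?thesis by (simp add: power2_commute)
qed

lemma sqdist_diff_le_endpoints:
  fixes a b m l h :: real
  assumes "l \<le> m" "m \<le> h"
  shows "(b - m)\<^sup>2 - (a - m)\<^sup>2 \<le> max ((b - l)\<^sup>2 - (a - l)\<^sup>2) ((b - h)\<^sup>2 - (a - h)\<^sup>2)"
proof -
  have affine: "(b - t)\<^sup>2 - (a - t)\<^sup>2 = (b - a) * (b + a - 2 * t)" for t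
    by (simp add: power2_eq_square algebra_simps)
  show ?thesis
  proof (cases "0 \<le> b - a")
    case True
    then have "(b - a) * (b + a - 2 * m) \<le> (b - a) * (b + a - 2 * l)"
      using assms by (intro mult_left_mono) auto
    then show ?thesis unfolding affine by simp
  next
    case False
    then have "(b - a) * (b + a - 2 * m) \<le> (b - a) * (b + a - 2 * h)"
      using assms by (intro mult_left_mono_neg) auto
    then show ?thesis unfolding affine by simp
  qed
qed

lemma max_le_max_max:
  fixes A B A1 A2 B1 B2 :: "'a::linorder"
  assumes "A \<le> max A1 A2" "B \<le> max B1 B2"
  shows "max A B \<le> max (max A1 B1) (max A2 B2)"
proof -
  have "max A B \<le> max (max A1 A2) (max B1 B2)" using assms by (rule max.mono)
  also have "\<dots> = max (max A1 B1) (max A2 B2)" by (simp only: max.assoc max.left_commute)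
  finally show ?thesis .
qed

lemma max_jump_le_endpoints:
  assumes "l \<le> m" "m \<le> h"
  shows "max_jump L U a m \<le> max (max_jump L U a l) (max_jump L U a h)"
  unfolding max_jump_def
  by (intro max_le_max_max sqdist_diff_le_endpoints sqdist_le_endpoints assms)

lemma max_sqdist_le_endpoints:
  assumes "l \<le> m" "m \<le> h"
  shows "max_sqdist L U m \<le> max (max_sqdist L U l) (max_sqdist L U h)"
  unfolding max_sqdist_def
  using max_le_max_max[OF sqdist_le_endpoints[OF assms, of L] sqdist_le_endpoints[OF assms, of U]]
  by (simp add: power2_commute)

lemma card_less_if_subset_others:
  assumes "D \<subseteq> {..<n} - {j}" "j < n" shows "card D < n"
proof -
  have "card D \<le> card ({..<n} - {j})" using assms by (intro card_mono) auto
  then show ?thesis using assms by simp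
qed

lemma sum_others_eq:
  fixes x y :: "real list"
  assumes j: "j < n" and D: "D \<subseteq> {..<n} - {j}"
    and same: "\<forall>i<n. i \<notin> D \<and> i \<noteq> j \<longrightarrow> y ! i = x ! i"
  shows "(\<Sum>i<n. y ! i) - y ! j = (\<Sum>i<n. x ! i) - x ! j - (\<Sum>i\<in>D. x ! i - y ! i)"
proof -
  have "(\<Sum>i\<in>{..<n} - {j}. x ! i - y ! i) = (\<Sum>i\<in>D. x ! i - y ! i)"
    using D same by (intro sum.mono_neutral_right) auto
  then show ?thesis using j by (simp add: sum_diff1 sum_subtractf)
qed

lemma mean_others_within_lo_hi:
  assumes x: "x \<in> datasets n L U" and y: "y \<in> datasets n L U" and n: "2 \<le> n" and j: "j < n"
    and D: "D \<subseteq> {..<n} - {j}" and same: "\<forall>i<n. i \<notin> D \<and> i \<noteq> j \<longrightarrow> y ! i = x ! i"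
  shows "mean_others_lo n L x (card D) j \<le> mean_others n y j"
    "mean_others n y j \<le> mean_others_hi n U x (card D) j"
proof -
  have k: "card D < n" using card_less_if_subset_others[OF D j] .
  have "(\<Sum>i\<in>D. x ! i - y ! i) \<le> (\<Sum>i\<in>D. x ! i - L)"
    using D datasetsD(2)[OF y] by (intro sum_mono) auto
  also have "\<dots> \<le> top_sum_except n (\<lambda>i. x ! i - L) (card D) j"
    using sum_le_top_sum_except[OF _ j k D] datasetsD(2)[OF x] by simp
  finally have lo: "(\<Sum>i\<in>D. x ! i - y ! i) \<le> top_sum_except n (\<lambda>i. x ! i - L) (card D) j" .
  have "- (\<Sum>i\<in>D. x ! i - y ! i) = (\<Sum>i\<in>D. y ! i - x ! i)" by (simp add: sum_negf[symmetric])
  also have "\<dots> \<le> (\<Sum>i\<in>D. U - x ! i)"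
    using D datasetsD(3)[OF y] by (intro sum_mono) auto
  also have "\<dots> \<le> top_sum_except n (\<lambda>i. U - x ! i) (card D) j"
    using sum_le_top_sum_except[OF _ j k D] datasetsD(3)[OF x] by simp
  finally have hi: "- (\<Sum>i\<in>D. x ! i - y ! i) \<le> top_sum_except n (\<lambda>i. U - x ! i) (card D) j" .
  have "0 < real n - 1" using n by simp
  then show "mean_others_lo n L x (card D) j \<le> mean_others n y j"
    "mean_others n y j \<le> mean_others_hi n U x (card D) j"
    unfolding mean_others_lo_def mean_others_hi_def mean_others_def sum_others_eq[OF j D same]
    using lo hi by (auto intro: divide_right_mono)
qed

lemma differing_positions_except:
  assumes "length x = n" "j < n"
  obtains D where "D \<subseteq> {..<n} - {j}" "\<forall>i<n. i \<notin> D \<and> i \<noteq> j \<longrightarrow> y ! i = x ! i"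
    "hdist x y = (if y ! j = x ! j then card D else Suc (card D))"
proof -
  define D where "D = {i. i < n \<and> x ! i \<noteq> y ! i} - {j}"
  have "{i. i < length x \<and> x ! i \<noteq> y ! i} = (if y ! j = x ! j then D else insert j D)"
    using assms unfolding D_def by auto
  moreover have "finite D" "j \<notin> D" unfolding D_def by auto
  ultimately have "hdist x y = (if y ! j = x ! j then card D else Suc (card D))"
    unfolding hdist_def by simp
  moreover have "D \<subseteq> {..<n} - {j}" "\<forall>i<n. i \<notin> D \<and> i \<noteq> j \<longrightarrow> y ! i = x ! i"
    unfolding D_def by auto
  ultimately show ?thesis using that by blast
qed

lemma max_jump_discounted_le_max_candidate:
  assumes x: "x \<in> datasets n L U" and y: "y \<in> datasets n L U" and n: "2 \<le> n" and j: "j < n"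
  shows "exp (- \<beta> * real (hdist x y)) * max_jump L U (y ! j) (mean_others n y j)
           \<le> max_candidate n L U \<beta> x"
proof -
  obtain D where D: "D \<subseteq> {..<n} - {j}" and same: "\<forall>i<n. i \<notin> D \<and> i \<noteq> j \<longrightarrow> y ! i = x ! i"
    and dist: "hdist x y = (if y ! j = x ! j then card D else Suc (card D))"
    using differing_positions_except[OF datasetsD(1)[OF x] j] .
  let ?k = "card D" and ?m = "mean_others n y j"
  let ?lo = "mean_others_lo n L x ?k j" and ?hi = "mean_others_hi n U x ?k j"
  have k: "?k < n" using card_less_if_subset_others[OF D j] .
  note within = mean_others_within_lo_hi[OF x y n j D same]
  have bound: "exp (- \<beta> * real ?k) * max_jump L U (x ! j) m \<le> max_candidate n L U \<beta> x"
    "exp (- \<beta> * real (Suc ?k)) * max_sqdist L U m \<le> max_candidate n L U \<beta> x"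
    if "m \<in> {?lo, ?hi}" for m
    using discounted_le_max_candidate[OF k j that] by auto
  show ?thesis
  proof (cases "y ! j = x ! j")
    case True
    have "max_jump L U (y ! j) ?m \<le> max (max_jump L U (x ! j) ?lo) (max_jump L U (x ! j) ?hi)"
      using True max_jump_le_endpoints[OF within] by simp
    then have "exp (- \<beta> * real ?k) * max_jump L U (y ! j) ?m
        \<le> exp (- \<beta> * real ?k) * max (max_jump L U (x ! j) ?lo) (max_jump L U (x ! j) ?hi)"
      by (rule mult_left_mono) simp
    also have "\<dots> \<le> max_candidate n L U \<beta> x"
      using bound(1)[of ?lo] bound(1)[of ?hi] by (simp add: mult_max_le_iff)
    finally show ?thesis using True dist by simp
  next
    case False
    have "max_jump L U (y ! j) ?m \<le> max (max_sqdist L U ?lo) (max_sqdist L U ?hi)"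
      using max_jump_le_max_sqdist[OF datasetsD(2,3)[OF y j]] max_sqdist_le_endpoints[OF within]
      by (rule order_trans)
    then have "exp (- \<beta> * real (Suc ?k)) * max_jump L U (y ! j) ?m
        \<le> exp (- \<beta> * real (Suc ?k)) * max (max_sqdist L U ?lo) (max_sqdist L U ?hi)"
      by (rule mult_left_mono) simp
    also have "\<dots> \<le> max_candidate n L U \<beta> x"
      using bound(2)[of ?lo] bound(2)[of ?hi] by (simp add: mult_max_le_iff)
    finally show ?thesis using False dist by simp
  qed
qed

lemma local_sens_variance_discounted_le:
  assumes x: "x \<in> datasets n L U" and y: "y \<in> datasets n L U" and n: "2 \<le> n" and LU: "L < U"
  shows "local_sens variance n L U y * exp (- \<beta> * real (hdist x y))
           \<le> var_scale n * max_candidate n L U \<beta> x"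
proof -
  define E where "E = exp (- \<beta> * real (hdist x y))"
  have E: "0 < E" unfolding E_def by simp
  have "local_sens variance n L U y \<le> var_scale n * max_candidate n L U \<beta> x / E"
  proof (rule local_sens_variance_le[OF y n LU])
    fix j assume j: "j < n"
    have "max_jump L U (y ! j) (mean_others n y j) \<le> max_candidate n L U \<beta> x / E"
      using max_jump_discounted_le_max_candidate[OF x y n j, of \<beta>] E
      unfolding E_def[symmetric] by (simp add: field_simps)
    then have "var_scale n * max_jump L U (y ! j) (mean_others n y j)
        \<le> var_scale n * (max_candidate n L U \<beta> x / E)"
      by (rule mult_left_mono) (use var_scale_nonneg[of n] n in simp)
    then show "var_scale n * max_jump L U (y ! j) (mean_others n y j)
        \<le> var_scale n * max_candidate n L U \<beta> x / E"
      by simp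
  qed
  then show ?thesis using E unfolding E_def[symmetric] by (simp add: field_simps)
qed

lemma bdd_above_discounted_local_sens:
  assumes x: "x \<in> datasets n L U" and n: "2 \<le> n" and LU: "L < U"
  shows "bdd_above ((\<lambda>y. local_sens variance n L U y * exp (- \<beta> * real (hdist x y))) ` datasets n L U)"
  using local_sens_variance_discounted_le[OF x _ n LU] unfolding bdd_above_def by blast

lemma smooth_sens_variance_le:
  assumes x: "x \<in> datasets n L U" and n: "2 \<le> n" and LU: "L < U"
  shows "smooth_sens variance \<beta> n L U x \<le> var_scale n * max_candidate n L U \<beta> x"
  unfolding smooth_sens_def using x local_sens_variance_discounted_le[OF x _ n LU]
  by (intro cSUP_least) auto

lemma discounted_local_sens_le_smooth_sens:
  assumes x: "x \<in> datasets n L U" and n: "2 \<le> n" and LU: "L < U" and \<beta>: "0 \<le> \<beta>"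
    and z: "z \<in> datasets n L U" and dist: "hdist x z \<le> k"
  shows "local_sens variance n L U z * exp (- \<beta> * real k) \<le> smooth_sens variance \<beta> n L U x"
proof -
  have "exp (- \<beta> * real k) \<le> exp (- \<beta> * real (hdist x z))"
    using dist \<beta> by (simp add: mult_left_mono)
  then have "local_sens variance n L U z * exp (- \<beta> * real k)
      \<le> local_sens variance n L U z * exp (- \<beta> * real (hdist x z))"
    using local_sens_variance_nonneg[OF z n LU] by (intro mult_left_mono)
  also have "\<dots> \<le> smooth_sens variance \<beta> n L U x"
    unfolding smooth_sens_def using z bdd_above_discounted_local_sens[OF x n LU]
    by (intro cSUP_upper) auto
  finally show ?thesis .
qed

lemma candidate_attained:
  assumes x: "x \<in> datasets n L U" and n: "2 \<le> n" and LU: "L < U" and \<beta>: "0 \<le> \<beta>"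
    and j: "j < n" and y: "y \<in> datasets n L U" and yj: "y ! j = x ! j" and dist: "hdist x y \<le> k"
  shows "var_scale n * (exp (- \<beta> * real k) * max_jump L U (x ! j) (mean_others n y j))
           \<le> smooth_sens variance \<beta> n L U x"
    "var_scale n * (exp (- \<beta> * real (Suc k)) * max_sqdist L U (mean_others n y j))
           \<le> smooth_sens variance \<beta> n L U x"
proof -
  let ?m = "mean_others n y j"
  have len: "length y = n" using datasetsD(1)[OF y] .
  have "var_scale n * (exp (- \<beta> * real k) * max_jump L U (x ! j) ?m)
      = var_scale n * max_jump L U (y ! j) ?m * exp (- \<beta> * real k)"
    using yj by simp
  also have "\<dots> \<le> local_sens variance n L U y * exp (- \<beta> * real k)"
    using local_sens_variance_ge[OF y n LU j] by (rule mult_right_mono) simp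
  also have "\<dots> \<le> smooth_sens variance \<beta> n L U x"
    by (rule discounted_local_sens_le_smooth_sens[OF x n LU \<beta> y dist])
  finally show "var_scale n * (exp (- \<beta> * real k) * max_jump L U (x ! j) ?m)
      \<le> smooth_sens variance \<beta> n L U x" .
  \<comment> \<open>moving \<open>y ! j\<close> to the mean of the others keeps that mean and makes the jump \<open>max_sqdist\<close>\<close>
  define y' where "y' = y[j := ?m]"
  have y': "y' \<in> datasets n L U"
    unfolding y'_def using datasets_list_update[OF y mean_others_between[OF y n j]] .
  have y'j: "y' ! j = ?m" unfolding y'_def using j len by simp
  have "mean_others n y' j = ?m"
    unfolding mean_others_def y'_def using sum_nth_list_update[OF j len, of "\<lambda>x. x"] j len by simp
  then have LS: "var_scale n * max_sqdist L U ?m \<le> local_sens variance n L U y'"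
    using local_sens_variance_ge[OF y' n LU j] y'j by (simp add: max_jump_self)
  have dist': "hdist x y' \<le> Suc k"
  proof -
    have "{i. i < length x \<and> x ! i \<noteq> y' ! i} \<subseteq> insert j {i. i < length x \<and> x ! i \<noteq> y ! i}"
      unfolding y'_def by (auto simp: nth_list_update)
    then have "hdist x y' \<le> card (insert j {i. i < length x \<and> x ! i \<noteq> y ! i})"
      unfolding hdist_def by (intro card_mono) auto
    also have "\<dots> \<le> Suc (hdist x y)" unfolding hdist_def by (simp add: card_insert_if)
    finally show ?thesis using dist by simp
  qed
  have "var_scale n * (exp (- \<beta> * real (Suc k)) * max_sqdist L U ?m)
      = var_scale n * max_sqdist L U ?m * exp (- \<beta> * real (Suc k))"
    by simp
  also have "\<dots> \<le> local_sens variance n L U y' * exp (- \<beta> * real (Suc k))"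
    using LS by (rule mult_right_mono) simp
  also have "\<dots> \<le> smooth_sens variance \<beta> n L U x"
    by (rule discounted_local_sens_le_smooth_sens[OF x n LU \<beta> y' dist'])
  finally show "var_scale n * (exp (- \<beta> * real (Suc k)) * max_sqdist L U ?m)
      \<le> smooth_sens variance \<beta> n L U x" .
qed

definition set_entries :: "nat \<Rightarrow> real list \<Rightarrow> nat set \<Rightarrow> real \<Rightarrow> real list" where
  "set_entries n x T p = map (\<lambda>i. if i \<in> T then p else x ! i) [0..<n]"

lemma set_entries_props:
  assumes x: "x \<in> datasets n L U" and j: "j < n" and T: "T \<subseteq> {..<n} - {j}"
    and p: "L \<le> p" "p \<le> U"
  shows "set_entries n x T p \<in> datasets n L U" "set_entries n x T p ! j = x ! j"
    "hdist x (set_entries n x T p) \<le> card T"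
    "(\<Sum>i<n. set_entries n x T p ! i) - set_entries n x T p ! j
       = (\<Sum>i<n. x ! i) - x ! j - (\<Sum>i\<in>T. x ! i - p)"
proof -
  let ?y = "set_entries n x T p"
  have len: "length x = n" "length ?y = n" using datasetsD(1)[OF x] unfolding set_entries_def by auto
  have nth: "?y ! i = (if i \<in> T then p else x ! i)" if "i < n" for i
    using that unfolding set_entries_def by simp
  show "?y \<in> datasets n L U" unfolding datasets_def using len nth p datasetsD(2,3)[OF x] by auto
  show "?y ! j = x ! j" using nth j T by auto
  have "{i. i < length x \<and> x ! i \<noteq> ?y ! i} \<subseteq> T" using nth len by (auto split: if_splits)
  then show "hdist x ?y \<le> card T"
    unfolding hdist_def using T by (intro card_mono[OF finite_subset[OF T]]) auto
  have "(\<Sum>i\<in>T. x ! i - ?y ! i) = (\<Sum>i\<in>T. x ! i - p)" using nth T by (intro sum.cong) auto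
  then show "(\<Sum>i<n. ?y ! i) - ?y ! j = (\<Sum>i<n. x ! i) - x ! j - (\<Sum>i\<in>T. x ! i - p)"
    using sum_others_eq[OF j T, of ?y x] nth by auto
qed

lemma mean_others_lo_attained:
  assumes x: "x \<in> datasets n L U" and LU: "L < U" and j: "j < n" and k: "k < n"
  obtains y where "y \<in> datasets n L U" "y ! j = x ! j" "hdist x y \<le> k"
    "mean_others n y j = mean_others_lo n L x k j"
proof -
  obtain T where T: "T \<subseteq> {..<n} - {j}" "card T = k"
    "sum (\<lambda>i. x ! i - L) T = top_sum_except n (\<lambda>i. x ! i - L) k j"
    using top_sum_except_attained[OF j k] .
  note y = set_entries_props[OF x j T(1) order_refl less_imp_le[OF LU]]
  show ?thesis
    by (rule that[OF y(1,2)]) (use y(3,4) T in \<open>simp_all add: mean_others_def mean_others_lo_def\<close>)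
qed

lemma mean_others_hi_attained:
  assumes x: "x \<in> datasets n L U" and LU: "L < U" and j: "j < n" and k: "k < n"
  obtains y where "y \<in> datasets n L U" "y ! j = x ! j" "hdist x y \<le> k"
    "mean_others n y j = mean_others_hi n U x k j"
proof -
  obtain T where T: "T \<subseteq> {..<n} - {j}" "card T = k"
    "sum (\<lambda>i. U - x ! i) T = top_sum_except n (\<lambda>i. U - x ! i) k j"
    using top_sum_except_attained[OF j k] .
  note y = set_entries_props[OF x j T(1) less_imp_le[OF LU] order_refl]
  have "(\<Sum>i\<in>T. x ! i - U) = - top_sum_except n (\<lambda>i. U - x ! i) k j"
    unfolding T(3)[symmetric] by (simp add: sum_negf[symmetric])
  then show ?thesis
    by (intro that[OF y(1,2)]) (use y(3,4) T in \<open>simp_all add: mean_others_def mean_others_hi_def\<close>)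
qed

lemma candidate_term_le_smooth_sens:
  assumes x: "x \<in> datasets n L U" and n: "2 \<le> n" and LU: "L < U" and \<beta>: "0 \<le> \<beta>"
    and j: "j < n" and y: "y \<in> datasets n L U" "y ! j = x ! j" "hdist x y \<le> k"
    and v: "v \<in> set (candidate_terms L U (exp (- \<beta> * real k)) (exp (- \<beta> * real (Suc k)))
              (x ! j) (mean_others n y j))"
  shows "var_scale n * v \<le> smooth_sens variance \<beta> n L U x"
proof -
  let ?E = "exp (- \<beta> * real k)" and ?E' = "exp (- \<beta> * real (Suc k))" and ?m = "mean_others n y j"
  have K: "0 \<le> var_scale n" using var_scale_nonneg[of n] n by simp
  have "\<forall>w \<in> set (candidate_terms L U ?E ?E' (x ! j) ?m).
      w \<le> max (?E * max_jump L U (x ! j) ?m) (?E' * max_sqdist L U ?m)"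
    by (subst candidate_terms_le_iff) auto
  then have "v \<le> max (?E * max_jump L U (x ! j) ?m) (?E' * max_sqdist L U ?m)"
    using v by blast
  then have "var_scale n * v \<le> var_scale n * max (?E * max_jump L U (x ! j) ?m) (?E' * max_sqdist L U ?m)"
    using K by (rule mult_left_mono)
  also have "\<dots> \<le> smooth_sens variance \<beta> n L U x"
    using candidate_attained[OF x n LU \<beta> j y] K by (simp add: mult_max_le_iff)
  finally show ?thesis .
qed

lemma smooth_sens_variance_ge:
  assumes x: "x \<in> datasets n L U" and n: "2 \<le> n" and LU: "L < U" and \<beta>: "0 \<le> \<beta>"
  shows "var_scale n * max_candidate n L U \<beta> x \<le> smooth_sens variance \<beta> n L U x"
proof -
  let ?S = "\<Union>k<n. \<Union>j<n. set (candidates n L U \<beta> x k j)"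
  have "max_candidate n L U \<beta> x \<in> insert 0 ?S"
    unfolding max_candidate_def by (intro Max_in) auto
  then consider "max_candidate n L U \<beta> x = 0"
    | k j where "k < n" "j < n" "max_candidate n L U \<beta> x \<in> set (candidates n L U \<beta> x k j)"
    by blast
  then show ?thesis
  proof cases
    case 1
    have "hdist x x = 0" unfolding hdist_def by simp
    then have "local_sens variance n L U x * exp (- \<beta> * real 0) \<le> smooth_sens variance \<beta> n L U x"
      by (intro discounted_local_sens_le_smooth_sens[OF x n LU \<beta> x]) simp
    then show ?thesis using local_sens_variance_nonneg[OF x n LU] 1 by simp
  next
    case (2 k j)
    note attained = candidate_term_le_smooth_sens[OF x n LU \<beta> \<open>j < n\<close>]
    obtain y where "y \<in> datasets n L U" "y ! j = x ! j" "hdist x y \<le> k"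
      "mean_others n y j = mean_others_lo n L x k j"
      using mean_others_lo_attained[OF x LU \<open>j < n\<close> \<open>k < n\<close>] .
    moreover obtain y' where "y' \<in> datasets n L U" "y' ! j = x ! j" "hdist x y' \<le> k"
      "mean_others n y' j = mean_others_hi n U x k j"
      using mean_others_hi_attained[OF x LU \<open>j < n\<close> \<open>k < n\<close>] .
    ultimately show ?thesis
      using 2(3) attained[of y k] attained[of y' k] unfolding candidates_def by auto
  qed
qed

lemma local_sens_variance_singleton:
  assumes y: "y \<in> datasets 1 L U" and LU: "L < U"
  shows "local_sens variance 1 L U y = 0"
proof -
  have "variance z = 0" if "z \<in> datasets 1 L U" for z
    using datasetsD(1)[OF that] unfolding variance_def mean_def by simp
  then have "local_sens variance 1 L U y = (SUP z\<in>{z \<in> datasets 1 L U. hdist y z = 1}. 0)"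
    unfolding local_sens_def using y by (intro SUP_cong) auto
  also have "\<dots> = 0" using exists_neighbor[OF y order_refl LU] by (intro cSUP_const) auto
  finally show ?thesis .
qed

theorem smooth_sens_variance:
  assumes x: "x \<in> datasets n L U" and n: "1 \<le> n" and LU: "L < U" and \<beta>: "0 \<le> \<beta>"
  shows "smooth_sens variance \<beta> n L U x = var_scale n * max_candidate n L U \<beta> x"
proof (cases "n = 1")
  case True
  have "smooth_sens variance \<beta> n L U x = (SUP y\<in>datasets n L U. 0)"
    unfolding smooth_sens_def using local_sens_variance_singleton LU True by (intro SUP_cong) auto
  also have "\<dots> = 0" using x by (intro cSUP_const) auto
  finally show ?thesis using True unfolding var_scale_def by simp
next
  case False
  then have "2 \<le> n" using n by simp
  show ?thesis
    using smooth_sens_variance_le[OF x \<open>2 \<le> n\<close> LU] smooth_sens_variance_ge[OF x \<open>2 \<le> n\<close> LU \<beta>]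
    by (rule antisym)
qed

section \<open>Execution within a time bound\<close>

definition exec :: "com \<Rightarrow> state \<Rightarrow> nat \<Rightarrow> state \<Rightarrow> bool" where
  "exec c s T s' \<longleftrightarrow> (\<exists>t. big c s t s' \<and> t \<le> T)"

lemma exec_mono: "exec c s T s' \<Longrightarrow> T \<le> T' \<Longrightarrow> exec c s T' s'"
  unfolding exec_def by auto

lemma exec_Seq: "exec c1 s T1 sm \<Longrightarrow> exec c2 sm T2 sn \<Longrightarrow> exec (Seq c1 c2) s (T1 + T2) sn"
  unfolding exec_def by (auto intro!: add_mono intro: big.Seq)

lemma exec_SKIP: "exec SKIP s 1 s"
  unfolding exec_def by (auto intro: big.Skip)

lemma exec_NAssign: "exec (NAssign i a) (I, R) 1 (I(i := aval a I), R)"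
  unfolding exec_def by (auto intro: big.NAssign)

lemma exec_RStore: "exec (RStore a e) (I, R) 1 (I, R(aval a I := rval e (I, R)))"
  unfolding exec_def by (auto intro: big.RStore)

lemma exec_IfT: "bval b s \<Longrightarrow> exec c1 s T sm \<Longrightarrow> exec (If b c1 c2) s (T + 1) sm"
  unfolding exec_def by (auto intro: big.IfT)

lemma exec_IfF: "\<not> bval b s \<Longrightarrow> exec c2 s T sm \<Longrightarrow> exec (If b c1 c2) s (T + 1) sm"
  unfolding exec_def by (auto intro: big.IfF)

lemma exec_If_SKIP:
  assumes "exec c s T s'" "1 \<le> T"
  shows "exec (If b c SKIP) s (T + 1) (if bval b s then s' else s)"
  using exec_IfT[OF _ assms(1)] exec_IfF[OF _ exec_mono[OF exec_SKIP assms(2)]] by simp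

lemma exec_While:
  assumes body: "\<And>i. i < N \<Longrightarrow> bval b (st i) \<and> exec c (st i) T (st (Suc i))"
    and stop: "\<not> bval b (st N)"
  shows "exec (While b c) (st 0) (N * (T + 1) + 1) (st N)"
proof -
  have "exec (While b c) (st i) ((N - i) * (T + 1) + 1) (st N)" if "i \<le> N" for i
    using that
  proof (induction "N - i" arbitrary: i)
    case 0
    then show ?case using stop unfolding exec_def by (auto intro: big.WhileF)
  next
    case (Suc d)
    then have i: "i < N" and d: "d = N - Suc i" by auto
    obtain t1 where t1: "big c (st i) t1 (st (Suc i))" "t1 \<le> T"
      using body[OF i] unfolding exec_def by auto
    obtain t2 where t2: "big (While b c) (st (Suc i)) t2 (st N)" "t2 \<le> (N - Suc i) * (T + 1) + 1"
      using Suc.hyps(1)[OF d] i unfolding exec_def by auto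
    have "big (While b c) (st i) (t1 + t2 + 1) (st N)"
      using body[OF i] t1 t2 by (intro big.WhileT) auto
    moreover have "N - i = Suc (N - Suc i)" using i by simp
    then have "t1 + t2 + 1 \<le> (N - i) * (T + 1) + 1" using t1 t2 by simp
    ultimately show ?case unfolding exec_def by blast
  qed
  from this[of 0] show ?thesis by simp
qed

text \<open>Registers 0 to 4 hold \<open>n\<close>, the round \<open>k\<close>, the position \<open>j\<close> (also a loop index), an
  inner index \<open>l\<close> and a counter \<open>c\<close>. Real memory holds \<open>L\<close>, \<open>U\<close>, \<open>\<beta>\<close> at 0, 1, 2, the data at
  \<open>3, \<dots>, n + 2\<close>, the ranks of the values \<open>x ! i - L\<close> and \<open>U - x ! i\<close> in the next two blocks of
  \<open>n\<close> cells, and then eight scratch cells: the sum of the data, the running maximum, the top sums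
  of \<open>x ! i - L\<close> and of \<open>U - x ! i\<close> for \<open>k\<close> and \<open>k + 1\<close>, and the two extreme means of the
  others.\<close>
definition regs :: "nat \<Rightarrow> nat \<Rightarrow> nat \<Rightarrow> nat \<Rightarrow> nat \<Rightarrow> nat \<Rightarrow> nat" where
  "regs n k j l c = (\<lambda>i. if i = 0 then n else if i = 1 then k else if i = 2 then j
                        else if i = 3 then l else if i = 4 then c else 0)"

definition scratch :: "real \<Rightarrow> real \<Rightarrow> real \<Rightarrow> real \<Rightarrow> real \<Rightarrow> real \<Rightarrow> real \<Rightarrow> real \<Rightarrow> nat \<Rightarrow> real" where
  "scratch s a p1 p2 q1 q2 l h = (\<lambda>c. if c = 0 then s else if c = 1 then a else if c = 2 then p1
     else if c = 3 then p2 else if c = 4 then q1 else if c = 5 then q2 else if c = 6 then l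
     else if c = 7 then h else 0)"

definition memory :: "nat \<Rightarrow> real \<Rightarrow> real \<Rightarrow> real \<Rightarrow> real list \<Rightarrow> (nat \<Rightarrow> real) \<Rightarrow> (nat \<Rightarrow> real)
   \<Rightarrow> (nat \<Rightarrow> real) \<Rightarrow> nat \<Rightarrow> real" where
  "memory n L U \<beta> x fl fu sc = (\<lambda>a. if a = 0 then L else if a = 1 then U else if a = 2 then \<beta>
     else if a < 3 + n then x ! (a - 3)
     else if a < 3 + 2 * n then fl (a - (3 + n))
     else if a < 3 + 3 * n then fu (a - (3 + 2 * n))
     else sc (a - (3 + 3 * n)))"

definition addr_x :: "nat \<Rightarrow> nat" where "addr_x j = 3 + j"
definition addr_rankL :: "nat \<Rightarrow> nat \<Rightarrow> nat" where "addr_rankL n j = 3 + n + j"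
definition addr_rankU :: "nat \<Rightarrow> nat \<Rightarrow> nat" where "addr_rankU n j = 3 + 2 * n + j"
definition addr_scratch :: "nat \<Rightarrow> nat \<Rightarrow> nat" where "addr_scratch n c = 3 * n + 3 + c"

definition ranks :: "nat \<Rightarrow> (nat \<Rightarrow> real) \<Rightarrow> nat \<Rightarrow> real" where
  "ranks n w t = (if t < n then real (wrank n w t) else 0)"

abbreviation ranked_memory :: "nat \<Rightarrow> real \<Rightarrow> real \<Rightarrow> real \<Rightarrow> real list \<Rightarrow> (nat \<Rightarrow> real) \<Rightarrow> nat \<Rightarrow> real" where
  "ranked_memory n L U \<beta> x \<equiv> memory n L U \<beta> x (ranks n (\<lambda>i. x ! i - L)) (ranks n (\<lambda>i. U - x ! i))"

abbreviation round_scratch ::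
    "nat \<Rightarrow> real \<Rightarrow> real \<Rightarrow> real list \<Rightarrow> real \<Rightarrow> nat \<Rightarrow> real \<Rightarrow> real \<Rightarrow> nat \<Rightarrow> real" where
  "round_scratch n L U x a k l h \<equiv> scratch (\<Sum>i<n. x ! i) a
     (top_sum n (\<lambda>i. x ! i - L) k) (top_sum n (\<lambda>i. x ! i - L) (Suc k))
     (top_sum n (\<lambda>i. U - x ! i) k) (top_sum n (\<lambda>i. U - x ! i) (Suc k)) l h"

lemma regs_simps[simp]:
  "regs n k j l c 0 = n" "regs n k j l c (Suc 0) = k" "regs n k j l c 1 = k" "regs n k j l c 2 = j"
  "regs n k j l c 3 = l" "regs n k j l c 4 = c"
  "(regs n k j l c)(Suc 0 := v) = regs n v j l c"
  "(regs n k j l c)(1 := v) = regs n v j l c"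
  "(regs n k j l c)(2 := v) = regs n k v l c"
  "(regs n k j l c)(3 := v) = regs n k j v c"
  "(regs n k j l c)(4 := v) = regs n k j l v"
  unfolding regs_def by (auto intro!: ext)

lemma scratch_simps[simp]:
  "scratch s a p1 p2 q1 q2 l h 0 = s" "scratch s a p1 p2 q1 q2 l h (Suc 0) = a"
  "scratch s a p1 p2 q1 q2 l h 1 = a"
  "scratch s a p1 p2 q1 q2 l h 2 = p1" "scratch s a p1 p2 q1 q2 l h 3 = p2"
  "scratch s a p1 p2 q1 q2 l h 4 = q1" "scratch s a p1 p2 q1 q2 l h 5 = q2"
  "scratch s a p1 p2 q1 q2 l h 6 = l" "scratch s a p1 p2 q1 q2 l h 7 = h"
  "(scratch s a p1 p2 q1 q2 l h)(0 := v) = scratch v a p1 p2 q1 q2 l h"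
  "(scratch s a p1 p2 q1 q2 l h)(Suc 0 := v) = scratch s v p1 p2 q1 q2 l h"
  "(scratch s a p1 p2 q1 q2 l h)(1 := v) = scratch s v p1 p2 q1 q2 l h"
  "(scratch s a p1 p2 q1 q2 l h)(2 := v) = scratch s a v p2 q1 q2 l h"
  "(scratch s a p1 p2 q1 q2 l h)(3 := v) = scratch s a p1 v q1 q2 l h"
  "(scratch s a p1 p2 q1 q2 l h)(4 := v) = scratch s a p1 p2 v q2 l h"
  "(scratch s a p1 p2 q1 q2 l h)(5 := v) = scratch s a p1 p2 q1 v l h"
  "(scratch s a p1 p2 q1 q2 l h)(6 := v) = scratch s a p1 p2 q1 q2 v h"
  "(scratch s a p1 p2 q1 q2 l h)(7 := v) = scratch s a p1 p2 q1 q2 l v"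
  unfolding scratch_def by (auto intro!: ext)

lemma memory_simps[simp]:
  "memory n L U \<beta> x fl fu sc 0 = L"
  "memory n L U \<beta> x fl fu sc (Suc 0) = U"
  "memory n L U \<beta> x fl fu sc 1 = U"
  "memory n L U \<beta> x fl fu sc 2 = \<beta>"
  "j < n \<Longrightarrow> memory n L U \<beta> x fl fu sc (addr_x j) = x ! j"
  "j < n \<Longrightarrow> memory n L U \<beta> x fl fu sc (addr_rankL n j) = fl j"
  "j < n \<Longrightarrow> memory n L U \<beta> x fl fu sc (addr_rankU n j) = fu j"
  "memory n L U \<beta> x fl fu sc (addr_scratch n c) = sc c"
  unfolding memory_def addr_x_def addr_rankL_def addr_rankU_def addr_scratch_def by auto

lemma memory_update[simp]:
  "j < n \<Longrightarrow> (memory n L U \<beta> x fl fu sc)(addr_rankL n j := v) = memory n L U \<beta> x (fl(j := v)) fu sc"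
  "j < n \<Longrightarrow> (memory n L U \<beta> x fl fu sc)(addr_rankU n j := v) = memory n L U \<beta> x fl (fu(j := v)) sc"
  "(memory n L U \<beta> x fl fu sc)(addr_scratch n c := v) = memory n L U \<beta> x fl fu (sc(c := v))"
proof -
  show "j < n \<Longrightarrow> (memory n L U \<beta> x fl fu sc)(addr_rankL n j := v) = memory n L U \<beta> x (fl(j := v)) fu sc"
    unfolding memory_def addr_rankL_def by (rule ext, rename_tac a, case_tac "a = 3 + n + j") auto
  show "j < n \<Longrightarrow> (memory n L U \<beta> x fl fu sc)(addr_rankU n j := v) = memory n L U \<beta> x fl (fu(j := v)) sc"
    unfolding memory_def addr_rankU_def by (rule ext, rename_tac a, case_tac "a = 3 + 2 * n + j") auto
  show "(memory n L U \<beta> x fl fu sc)(addr_scratch n c := v) = memory n L U \<beta> x fl fu (sc(c := v))"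
    unfolding memory_def addr_scratch_def by (rule ext, rename_tac a, case_tac "a = 3 * n + 3 + c") auto
qed

lemma ranks_nth[simp]: "t < n \<Longrightarrow> ranks n w t = real (wrank n w t)"
  unfolding ranks_def by simp

lemma init_state_eq:
  assumes "length x = n"
  shows "init_state n L U \<beta> x = (regs n 0 0 0 0, memory n L U \<beta> x (\<lambda>_. 0) (\<lambda>_. 0) (scratch 0 0 0 0 0 0 0 0))"
proof -
  have "(\<lambda>i. if i = 0 then n else 0) = regs n 0 0 0 0" unfolding regs_def by (auto intro!: ext)
  moreover have "(\<lambda>a. if a = 0 then L else if a = 1 then U else if a = 2 then \<beta>
      else if 3 \<le> a \<and> a - 3 < length x then x ! (a - 3) else 0)
    = memory n L U \<beta> x (\<lambda>_. 0) (\<lambda>_. 0) (scratch 0 0 0 0 0 0 0 0)" (is "?init = ?mem")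
  proof
    fix a
    show "?init a = ?mem a"
    proof (cases "a < 3")
      case True
      then show ?thesis unfolding memory_def by (cases "a = 0"; cases "a = 1") auto
    next
      case False
      then show ?thesis unfolding memory_def scratch_def using assms by auto
    qed
  qed
  ultimately show ?thesis unfolding init_state_def by simp
qed

section \<open>The program\<close>

lemma foldl_max_eq_Max: "foldl max a xs = Max (insert a (set xs))"
  for a :: "'a::linorder"
proof -
  have "(\<lambda>x s. max s x) = (max :: 'a \<Rightarrow> 'a \<Rightarrow> 'a)" by (auto simp: fun_eq_iff max.commute)
  then show ?thesis by (simp add: foldl_conv_fold Max.set_eq_fold[symmetric])
qed

lemma Max_insert_Max:
  fixes a :: "'a::linorder"
  assumes "finite A" "finite B"
  shows "Max (insert (Max (insert a A)) B) = Max (insert a (A \<union> B))"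
proof (cases "B = {}")
  case False
  have "Max (insert a (A \<union> B)) = Max (insert a A \<union> B)" by simp
  also have "\<dots> = max (Max (insert a A)) (Max B)" using assms False by (intro Max.union) auto
  also have "\<dots> = Max (insert (Max (insert a A)) B)" using assms False by simp
  finally show ?thesis ..
qed simp

fun row_max :: "(nat \<Rightarrow> nat \<Rightarrow> real list) \<Rightarrow> nat \<Rightarrow> real \<Rightarrow> nat \<Rightarrow> real" where
  "row_max f k a 0 = a"
| "row_max f k a (Suc j) = foldl max (row_max f k a j) (f k j)"

fun running_max :: "(nat \<Rightarrow> nat \<Rightarrow> real list) \<Rightarrow> nat \<Rightarrow> nat \<Rightarrow> real" where
  "running_max f n 0 = 0"
| "running_max f n (Suc k) = row_max f k (running_max f n k) n"

lemma row_max_eq_Max: "row_max f k a j = Max (insert a (\<Union>j'<j. set (f k j')))"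
  by (induction j) (simp_all add: foldl_max_eq_Max Max_insert_Max lessThan_Suc Un_commute)

lemma running_max_eq_Max: "running_max f n k = Max (insert 0 (\<Union>k'<k. \<Union>j<n. set (f k' j)))"
  by (induction k) (simp_all add: row_max_eq_Max Max_insert_Max lessThan_Suc Un_commute)

definition ptr_x :: "aexp \<Rightarrow> aexp" where
  "ptr_x a = NAdd (NConst 3) a"
definition ptr_rankL :: "aexp \<Rightarrow> aexp" where
  "ptr_rankL a = NAdd (NAdd (NConst 3) (NReg 0)) a"
definition ptr_rankU :: "aexp \<Rightarrow> aexp" where
  "ptr_rankU a = NAdd (NAdd (NConst 3) (NMul (NConst 2) (NReg 0))) a"
definition ptr_scratch :: "nat \<Rightarrow> aexp" where
  "ptr_scratch c = NAdd (NAdd (NMul (NConst 3) (NReg 0)) (NConst 3)) (NConst c)"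

lemma aval_ptr[simp]:
  "aval (ptr_x a) I = addr_x (aval a I)"
  "aval (ptr_rankL a) I = addr_rankL (I 0) (aval a I)"
  "aval (ptr_rankU a) I = addr_rankU (I 0) (aval a I)"
  "aval (ptr_scratch c) I = addr_scratch (I 0) c"
  unfolding ptr_x_def ptr_rankL_def ptr_rankU_def ptr_scratch_def
    addr_x_def addr_rankL_def addr_rankU_def addr_scratch_def
  by simp_all

definition BOr :: "bexp \<Rightarrow> bexp \<Rightarrow> bexp" where
  "BOr a b = BNot (BAnd (BNot a) (BNot b))"

lemma bval_BOr[simp]: "bval (BOr a b) s = (bval a s \<or> bval b s)"
  unfolding BOr_def by simp

definition incr :: "nat \<Rightarrow> com" where "incr r = NAssign r (NAdd (NReg r) (NConst 1))"
definition load_x :: "aexp \<Rightarrow> rexp" where "load_x a = RLoad (ptr_x a)"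
definition gapL :: "aexp \<Rightarrow> rexp" where "gapL a = RSub (load_x a) (RLoad (NConst 0))"
definition gapU :: "aexp \<Rightarrow> rexp" where "gapU a = RSub (RLoad (NConst 1)) (load_x a)"
definition below_n :: "nat \<Rightarrow> bexp" where "below_n r = BNLess (NReg r) (NReg 0)"

lemma exec_incr: "exec (incr r) (I, R) 1 (I(r := Suc (I r)), R)"
  unfolding incr_def using exec_NAssign[of r "NAdd (NReg r) (NConst 1)" I R] by simp

lemma exec_atoms[simp]:
  "s' = (I(i := aval a I), R) \<Longrightarrow> 1 \<le> T \<Longrightarrow> exec (NAssign i a) (I, R) T s'"
  "s' = (I, R(aval a I := rval e (I, R))) \<Longrightarrow> 1 \<le> T \<Longrightarrow> exec (RStore a e) (I, R) T s'"
  "s' = (I(r := Suc (I r)), R) \<Longrightarrow> 1 \<le> T \<Longrightarrow> exec (incr r) (I, R) T s'"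
  "s' = s \<Longrightarrow> 1 \<le> T \<Longrightarrow> exec SKIP s T s'"
  using exec_mono[OF exec_NAssign] exec_mono[OF exec_RStore] exec_mono[OF exec_incr]
    exec_mono[OF exec_SKIP]
  by auto

lemma rval_load_x[simp]:
  "aval a I < n \<Longrightarrow> rval (load_x a) (I, memory n L U \<beta> x fl fu sc) = x ! aval a I"
  unfolding load_x_def by simp

lemma rval_gapL[simp]:
  "aval a I < n \<Longrightarrow> rval (gapL a) (I, memory n L U \<beta> x fl fu sc) = x ! aval a I - L"
  unfolding gapL_def by simp

lemma rval_gapU[simp]:
  "aval a I < n \<Longrightarrow> rval (gapU a) (I, memory n L U \<beta> x fl fu sc) = U - x ! aval a I"
  unfolding gapU_def by simp

definition sum_step :: com where
  "sum_step = Seq (RStore (ptr_scratch 0) (RAdd (RLoad (ptr_scratch 0)) (load_x (NReg 2)))) (incr 2)"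

definition sum_prog :: com where
  "sum_prog = Seq (RStore (ptr_scratch 0) (RConst 0))
     (Seq (NAssign 2 (NConst 0)) (Seq (While (below_n 2) sum_step) (NAssign 2 (NConst 0))))"

lemma exec_sum_prog:
  "exec sum_prog (regs n 0 0 0 0, memory n L U \<beta> x fl fu (scratch s 0 0 0 0 0 0 0)) (3 * n + 4)
     (regs n 0 0 0 0, memory n L U \<beta> x fl fu (scratch (\<Sum>i<n. x ! i) 0 0 0 0 0 0 0))"
proof -
  define st where "st j = (regs n 0 j 0 0, memory n L U \<beta> x fl fu (scratch (\<Sum>i<j. x ! i) 0 0 0 0 0 0 0))" for j
  have "bval (below_n 2) (st j) \<and> exec sum_step (st j) 2 (st (Suc j))" if "j < n" for j
  proof
    show "bval (below_n 2) (st j)" unfolding st_def below_n_def using that by simp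
    have "exec sum_step (st j) (1 + 1) (st (Suc j))"
      unfolding sum_step_def st_def by (rule exec_Seq[OF exec_RStore]) (use that in \<open>simp add: add.commute\<close>)
    then show "exec sum_step (st j) 2 (st (Suc j))" by (rule exec_mono) simp
  qed
  then have loop: "exec (While (below_n 2) sum_step) (st 0) (n * (2 + 1) + 1) (st n)"
    by (intro exec_While) (auto simp: st_def below_n_def)
  have "exec sum_prog (regs n 0 0 0 0, memory n L U \<beta> x fl fu (scratch s 0 0 0 0 0 0 0))
     (1 + (1 + ((n * (2 + 1) + 1) + 1)))
     (regs n 0 0 0 0, memory n L U \<beta> x fl fu (scratch (\<Sum>i<n. x ! i) 0 0 0 0 0 0 0))"
    unfolding sum_prog_def
    apply (rule exec_Seq[OF exec_RStore])
    apply (rule exec_Seq[OF exec_NAssign])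
    apply (rule exec_Seq)
    using loop apply (simp add: st_def)
    apply (simp add: st_def)
    done
  then show ?thesis by (rule exec_mono) simp
qed

text \<open>Evaluates \<open>ranks_before\<close> for \<open>l\<close> in register 3 and \<open>j\<close> in register 2, the weights being
  given by \<open>key\<close>; the rank of \<open>j\<close> is found by counting such \<open>l\<close>.\<close>
definition ranks_before_test :: "(aexp \<Rightarrow> rexp) \<Rightarrow> bexp" where
  "ranks_before_test key = BOr (BRLess (key (NReg 2)) (key (NReg 3)))
     (BAnd (BAnd (BNot (BRLess (key (NReg 3)) (key (NReg 2)))) (BNot (BRLess (key (NReg 2)) (key (NReg 3)))))
           (BNLess (NReg 3) (NReg 2)))"

definition count_step :: "(aexp \<Rightarrow> rexp) \<Rightarrow> com" where
  "count_step key = Seq (If (ranks_before_test key) (incr 4) SKIP) (incr 3)"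

definition rank_step :: "(aexp \<Rightarrow> rexp) \<Rightarrow> (aexp \<Rightarrow> aexp) \<Rightarrow> com" where
  "rank_step key arr = Seq (NAssign 4 (NConst 0)) (Seq (NAssign 3 (NConst 0))
     (Seq (While (below_n 3) (count_step key)) (Seq (RStore (arr (NReg 2)) (RofNat (NReg 4)))
     (Seq (NAssign 3 (NConst 0)) (Seq (NAssign 4 (NConst 0)) (incr 2))))))"

definition rank_prog :: "(aexp \<Rightarrow> rexp) \<Rightarrow> (aexp \<Rightarrow> aexp) \<Rightarrow> com" where
  "rank_prog key arr =
     Seq (NAssign 2 (NConst 0)) (Seq (While (below_n 2) (rank_step key arr)) (NAssign 2 (NConst 0)))"

lemma card_less_Suc_conj:
  "card {l'. l' < Suc l \<and> P l'} = card {l'. l' < l \<and> P l'} + (if P l then 1 else 0)"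
proof -
  have "{l'. l' < Suc l \<and> P l'} = (if P l then insert l {l'. l' < l \<and> P l'} else {l'. l' < l \<and> P l'})"
    by (auto simp: less_Suc_eq)
  then show ?thesis by simp
qed

lemma exec_count_loop:
  fixes M :: "(nat \<Rightarrow> real) \<Rightarrow> nat \<Rightarrow> real" and w :: "nat \<Rightarrow> real"
  assumes key: "\<And>f I a. I 0 = n \<Longrightarrow> aval a I < n \<Longrightarrow> rval (key a) (I, M f) = w (aval a I)"
    and j: "j < n"
  shows "exec (While (below_n 3) (count_step key)) (regs n k j 0 0, M f) (n * 4 + 1)
      (regs n k j n (wrank n w j), M f)"
proof -
  define st where "st l = (regs n k j l (card {l'. l' < l \<and> ranks_before w l' j}), M f)" for l
  have "bval (below_n 3) (st l) \<and> exec (count_step key) (st l) 3 (st (Suc l))" if l: "l < n" for l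
  proof
    show "bval (below_n 3) (st l)" unfolding st_def below_n_def using l by simp
    have test: "bval (ranks_before_test key) (st l) = ranks_before w l j"
      unfolding st_def ranks_before_test_def ranks_before_def
      using key[of "regs n k j l _" "NReg 2"] key[of "regs n k j l _" "NReg 3"] j l
      by auto
    show "exec (count_step key) (st l) 3 (st (Suc l))"
    proof (cases "ranks_before w l j")
      case True
      have "exec (count_step key) (st l) ((1 + 1) + 1) (st (Suc l))"
        unfolding count_step_def
        apply (rule exec_Seq[OF exec_IfT[where sm="(regs n k j l (Suc (card {l'. l' < l \<and> ranks_before w l' j})), M f)"]])
        using test True apply simp
         apply (simp add: st_def)
        using True by (simp add: st_def card_less_Suc_conj)
      then show ?thesis by (rule exec_mono) simp
    next
      case False
      have "exec (count_step key) (st l) ((1 + 1) + 1) (st (Suc l))"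
        unfolding count_step_def
        apply (rule exec_Seq[OF exec_IfF[where sm="st l"]])
        using test False apply simp
         apply (simp add: st_def)
        using False by (simp add: st_def card_less_Suc_conj)
      then show ?thesis by (rule exec_mono) simp
    qed
  qed
  then have "exec (While (below_n 3) (count_step key)) (st 0) (n * (3 + 1) + 1) (st n)"
    by (intro exec_While) (auto simp: st_def below_n_def)
  then show ?thesis unfolding st_def wrank_def by simp
qed

lemma exec_rank_prog:
  fixes M :: "(nat \<Rightarrow> real) \<Rightarrow> nat \<Rightarrow> real" and w :: "nat \<Rightarrow> real"
  assumes key: "\<And>f I a. I 0 = n \<Longrightarrow> aval a I < n \<Longrightarrow> rval (key a) (I, M f) = w (aval a I)"
    and arr: "\<And>I a. I 0 = n \<Longrightarrow> aval (arr a) I = ad (aval a I)"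
    and store: "\<And>f i v. i < n \<Longrightarrow> (M f)(ad i := v) = M (f(i := v))"
  shows "exec (rank_prog key arr) (regs n k 0 0 0, M (\<lambda>_. 0)) (n * (4 * n + 8) + 3)
           (regs n k 0 0 0, M (ranks n w))"
proof -
  define f where "f j = (\<lambda>t. if t < j then real (wrank n w t) else 0)" for j
  define st where "st j = (regs n k j 0 0, M (f j))" for j
  have "bval (below_n 2) (st j) \<and> exec (rank_step key arr) (st j) (4 * n + 7) (st (Suc j))"
    if j: "j < n" for j
  proof
    show "bval (below_n 2) (st j)" unfolding st_def below_n_def using j by simp
    have f_Suc: "(f j)(j := real (wrank n w j)) = f (Suc j)" unfolding f_def by (auto intro!: ext)
    have "exec (rank_step key arr) (st j) (1 + (1 + ((n * 4 + 1) + (1 + (1 + (1 + 1)))))) (st (Suc j))"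
      unfolding rank_step_def st_def
      apply (rule exec_Seq[where sm="(regs n k j 0 0, M (f j))"])
       apply simp
      apply (rule exec_Seq[where sm="(regs n k j 0 0, M (f j))"])
       apply simp
      apply (rule exec_Seq[OF exec_count_loop[OF key j]])
       apply assumption+
      apply (rule exec_Seq[where sm="(regs n k j n (wrank n w j), M (f (Suc j)))"])
      using arr store j f_Suc apply simp
      apply (rule exec_Seq[where sm="(regs n k j 0 (wrank n w j), M (f (Suc j)))"])
       apply simp
      apply (rule exec_Seq[where sm="(regs n k j 0 0, M (f (Suc j)))"])
       apply simp
      apply simp
      done
    then show "exec (rank_step key arr) (st j) (4 * n + 7) (st (Suc j))" by (rule exec_mono) simp
  qed
  then have loop: "exec (While (below_n 2) (rank_step key arr)) (st 0) (n * (4 * n + 7 + 1) + 1) (st n)"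
    by (intro exec_While) (auto simp: st_def below_n_def)
  have f_ends: "f 0 = (\<lambda>_. 0)" "f n = ranks n w" unfolding f_def ranks_def by auto
  have "exec (rank_prog key arr) (regs n k 0 0 0, M (\<lambda>_. 0)) (1 + ((n * (4 * n + 7 + 1) + 1) + 1))
           (regs n k 0 0 0, M (ranks n w))"
    unfolding rank_prog_def
    apply (rule exec_Seq[where sm="st 0"])
     apply (simp add: st_def f_ends)
    apply (rule exec_Seq[OF loop])
    apply (simp add: st_def f_ends)
    done
  then show ?thesis by (rule exec_mono) (simp add: algebra_simps)
qed

definition add_if_ranked :: "nat \<Rightarrow> (aexp \<Rightarrow> aexp) \<Rightarrow> aexp \<Rightarrow> (aexp \<Rightarrow> rexp) \<Rightarrow> com" where
  "add_if_ranked c arr bnd key = If (BRLess (RLoad (arr (NReg 2))) (RofNat bnd))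
      (RStore (ptr_scratch c) (RAdd (RLoad (ptr_scratch c)) (key (NReg 2)))) SKIP"

definition top_sums_step :: com where
  "top_sums_step =
     Seq (add_if_ranked 2 ptr_rankL (NReg 1) gapL) (Seq (add_if_ranked 3 ptr_rankL (NAdd (NReg 1) (NConst 1)) gapL)
     (Seq (add_if_ranked 4 ptr_rankU (NReg 1) gapU) (Seq (add_if_ranked 5 ptr_rankU (NAdd (NReg 1) (NConst 1)) gapU)
     (incr 2))))"

definition top_sums_prog :: com where
  "top_sums_prog =
     Seq (RStore (ptr_scratch 2) (RConst 0)) (Seq (RStore (ptr_scratch 3) (RConst 0))
     (Seq (RStore (ptr_scratch 4) (RConst 0)) (Seq (RStore (ptr_scratch 5) (RConst 0))
     (Seq (NAssign 2 (NConst 0)) (Seq (While (below_n 2) top_sums_step) (NAssign 2 (NConst 0)))))))"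

lemma exec_add_to_scratch_if:
  assumes "I 0 = n"
  shows "exec (If b (RStore (ptr_scratch c) e) SKIP) (I, memory n L U \<beta> x fl fu sc) 2
    (I, memory n L U \<beta> x fl fu (sc(c := if bval b (I, memory n L U \<beta> x fl fu sc)
         then rval e (I, memory n L U \<beta> x fl fu sc) else sc c)))"
proof -
  let ?m = "memory n L U \<beta> x fl fu sc"
  have run: "exec (If b (RStore (ptr_scratch c) e) SKIP) (I, ?m) (1 + 1)
      (if bval b (I, ?m) then (I, ?m(aval (ptr_scratch c) I := rval e (I, ?m))) else (I, ?m))"
    by (rule exec_If_SKIP[OF exec_RStore]) simp
  have state: "(if bval b (I, ?m) then (I, ?m(aval (ptr_scratch c) I := rval e (I, ?m))) else (I, ?m))
      = (I, memory n L U \<beta> x fl fu (sc(c := if bval b (I, ?m) then rval e (I, ?m) else sc c)))"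
    using assms by (cases "bval b (I, ?m)") simp_all
  from run show ?thesis unfolding state by (rule exec_mono) simp
qed

definition partial_top_sum :: "nat \<Rightarrow> (nat \<Rightarrow> real) \<Rightarrow> nat \<Rightarrow> nat \<Rightarrow> real" where
  "partial_top_sum n w r j = (\<Sum>i<j. if wrank n w i < r then w i else 0)"

lemma partial_top_sum_Suc:
  "partial_top_sum n w r (Suc j)
     = (if wrank n w j < r then partial_top_sum n w r j + w j else partial_top_sum n w r j)"
  unfolding partial_top_sum_def by simp

lemma exec_top_sums_prog:
  "exec top_sums_prog (regs n k 0 0 0, ranked_memory n L U \<beta> x (scratch (\<Sum>i<n. x ! i) a 0 0 0 0 0 0))
     (10 * n + 7) (regs n k 0 0 0, ranked_memory n L U \<beta> x (round_scratch n L U x a k 0 0))"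
proof -
  let ?wL = "\<lambda>i. x ! i - L" and ?wU = "\<lambda>i. U - x ! i"
  define st where "st j = (regs n k j 0 0, ranked_memory n L U \<beta> x
     (scratch (\<Sum>i<n. x ! i) a (partial_top_sum n ?wL k j) (partial_top_sum n ?wL (Suc k) j)
        (partial_top_sum n ?wU k j) (partial_top_sum n ?wU (Suc k) j) 0 0))" for j
  have "bval (below_n 2) (st j) \<and> exec top_sums_step (st j) 9 (st (Suc j))" if j: "j < n" for j
  proof
    show "bval (below_n 2) (st j)" unfolding st_def below_n_def using j by simp
    have "exec top_sums_step (st j) (2 + (2 + (2 + (2 + 1)))) (st (Suc j))"
      unfolding top_sums_step_def st_def add_if_ranked_def
      apply (rule exec_Seq[OF exec_add_to_scratch_if], simp)+
      using j apply (simp add: partial_top_sum_Suc)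
      done
    then show "exec top_sums_step (st j) 9 (st (Suc j))" by (rule exec_mono) simp
  qed
  then have loop: "exec (While (below_n 2) top_sums_step) (st 0) (n * (9 + 1) + 1) (st n)"
    by (intro exec_While) (auto simp: st_def below_n_def)
  have top_sum: "partial_top_sum n w r n = top_sum n w r" for w r
    unfolding partial_top_sum_def top_sum_def ..
  have "exec top_sums_prog (regs n k 0 0 0, ranked_memory n L U \<beta> x (scratch (\<Sum>i<n. x ! i) a 0 0 0 0 0 0))
     (1 + (1 + (1 + (1 + (1 + ((n * (9 + 1) + 1) + 1))))))
     (regs n k 0 0 0, ranked_memory n L U \<beta> x (round_scratch n L U x a k 0 0))"
    unfolding top_sums_prog_def
    apply (rule exec_Seq[OF exec_RStore])+
    apply (rule exec_Seq[where sm="st 0"])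
     apply (simp add: st_def partial_top_sum_def)
    apply (rule exec_Seq[OF loop])
    apply (simp add: st_def top_sum)
    done
  then show ?thesis by (rule exec_mono) simp
qed

definition n_minus_one :: rexp where "n_minus_one = RSub (RofNat (NReg 0)) (RConst 1)"

definition lo_prog :: com where
  "lo_prog = If (BRLess (RLoad (ptr_rankL (NReg 2))) (RofNat (NReg 1)))
     (RStore (ptr_scratch 6) (RDiv (RSub (RSub (RLoad (ptr_scratch 0)) (load_x (NReg 2)))
        (RSub (RLoad (ptr_scratch 3)) (gapL (NReg 2)))) n_minus_one))
     (RStore (ptr_scratch 6) (RDiv (RSub (RSub (RLoad (ptr_scratch 0)) (load_x (NReg 2)))
        (RLoad (ptr_scratch 2))) n_minus_one))"

definition hi_prog :: com where
  "hi_prog = If (BRLess (RLoad (ptr_rankU (NReg 2))) (RofNat (NReg 1)))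
     (RStore (ptr_scratch 7) (RDiv (RAdd (RSub (RLoad (ptr_scratch 0)) (load_x (NReg 2)))
        (RSub (RLoad (ptr_scratch 5)) (gapU (NReg 2)))) n_minus_one))
     (RStore (ptr_scratch 7) (RDiv (RAdd (RSub (RLoad (ptr_scratch 0)) (load_x (NReg 2)))
        (RLoad (ptr_scratch 4))) n_minus_one))"

lemma exec_lo_prog:
  assumes j: "j < n"
  shows "exec lo_prog (regs n k j 0 0, ranked_memory n L U \<beta> x (round_scratch n L U x a k l h)) 2
     (regs n k j 0 0, ranked_memory n L U \<beta> x (round_scratch n L U x a k (mean_others_lo n L x k j) h))"
proof (cases "wrank n (\<lambda>i. x ! i - L) j < k")
  case True
  have "exec lo_prog (regs n k j 0 0, ranked_memory n L U \<beta> x (round_scratch n L U x a k l h)) (1 + 1)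
     (regs n k j 0 0, ranked_memory n L U \<beta> x (round_scratch n L U x a k (mean_others_lo n L x k j) h))"
    unfolding lo_prog_def
    by (rule exec_IfT) (use True j in \<open>simp_all add: mean_others_lo_def top_sum_except_def n_minus_one_def\<close>)
  then show ?thesis by (rule exec_mono) simp
next
  case False
  have "exec lo_prog (regs n k j 0 0, ranked_memory n L U \<beta> x (round_scratch n L U x a k l h)) (1 + 1)
     (regs n k j 0 0, ranked_memory n L U \<beta> x (round_scratch n L U x a k (mean_others_lo n L x k j) h))"
    unfolding lo_prog_def
    by (rule exec_IfF) (use False j in \<open>simp_all add: mean_others_lo_def top_sum_except_def n_minus_one_def\<close>)
  then show ?thesis by (rule exec_mono) simp
qed

lemma exec_hi_prog:
  assumes j: "j < n"
  shows "exec hi_prog (regs n k j 0 0, ranked_memory n L U \<beta> x (round_scratch n L U x a k l h)) 2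
     (regs n k j 0 0, ranked_memory n L U \<beta> x (round_scratch n L U x a k l (mean_others_hi n U x k j)))"
proof (cases "wrank n (\<lambda>i. U - x ! i) j < k")
  case True
  have "exec hi_prog (regs n k j 0 0, ranked_memory n L U \<beta> x (round_scratch n L U x a k l h)) (1 + 1)
     (regs n k j 0 0, ranked_memory n L U \<beta> x (round_scratch n L U x a k l (mean_others_hi n U x k j)))"
    unfolding hi_prog_def
    by (rule exec_IfT) (use True j in \<open>simp_all add: mean_others_hi_def top_sum_except_def n_minus_one_def\<close>)
  then show ?thesis by (rule exec_mono) simp
next
  case False
  have "exec hi_prog (regs n k j 0 0, ranked_memory n L U \<beta> x (round_scratch n L U x a k l h)) (1 + 1)
     (regs n k j 0 0, ranked_memory n L U \<beta> x (round_scratch n L U x a k l (mean_others_hi n U x k j)))"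
    unfolding hi_prog_def
    by (rule exec_IfF) (use False j in \<open>simp_all add: mean_others_hi_def top_sum_except_def n_minus_one_def\<close>)
  then show ?thesis by (rule exec_mono) simp
qed

definition max_update :: "rexp \<Rightarrow> com" where
  "max_update e = If (BRLess (RLoad (ptr_scratch 1)) e) (RStore (ptr_scratch 1) e) SKIP"

fun max_updates :: "rexp list \<Rightarrow> com" where
  "max_updates [] = SKIP"
| "max_updates (e # es) = Seq (max_update e) (max_updates es)"

lemma exec_max_updates:
  assumes "I 0 = n"
    and "list_all2 (\<lambda>e v. \<forall>a'. rval e (I, memory n L U \<beta> x fl fu (scratch s a' p1 p2 q1 q2 l h)) = v) es vs"
  shows "exec (max_updates es) (I, memory n L U \<beta> x fl fu (scratch s a p1 p2 q1 q2 l h)) (2 * length es + 1)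
           (I, memory n L U \<beta> x fl fu (scratch s (foldl max a vs) p1 p2 q1 q2 l h))"
  using assms(2)
proof (induction es arbitrary: a vs)
  case Nil
  then show ?case by simp
next
  case (Cons e es)
  then obtain v vs' where vs: "vs = v # vs'"
    and v: "\<forall>a'. rval e (I, memory n L U \<beta> x fl fu (scratch s a' p1 p2 q1 q2 l h)) = v"
    and vs': "list_all2 (\<lambda>e v. \<forall>a'. rval e (I, memory n L U \<beta> x fl fu (scratch s a' p1 p2 q1 q2 l h)) = v) es vs'"
    by (cases vs) auto
  have "exec (max_update e) (I, memory n L U \<beta> x fl fu (scratch s a p1 p2 q1 q2 l h)) (1 + 1)
      (I, memory n L U \<beta> x fl fu (scratch s (max a v) p1 p2 q1 q2 l h))"
    unfolding max_update_def
  proof (cases "a < v")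
    case True
    then show "exec (If (BRLess (RLoad (ptr_scratch 1)) e) (RStore (ptr_scratch 1) e) SKIP)
        (I, memory n L U \<beta> x fl fu (scratch s a p1 p2 q1 q2 l h)) (1 + 1)
        (I, memory n L U \<beta> x fl fu (scratch s (max a v) p1 p2 q1 q2 l h))"
      by (intro exec_IfT) (use v assms(1) in simp_all)
  next
    case False
    then show "exec (If (BRLess (RLoad (ptr_scratch 1)) e) (RStore (ptr_scratch 1) e) SKIP)
        (I, memory n L U \<beta> x fl fu (scratch s a p1 p2 q1 q2 l h)) (1 + 1)
        (I, memory n L U \<beta> x fl fu (scratch s (max a v) p1 p2 q1 q2 l h))"
      by (intro exec_IfF) (use v assms(1) in \<open>simp_all add: max_def\<close>)
  qed
  then have "exec (max_update e) (I, memory n L U \<beta> x fl fu (scratch s a p1 p2 q1 q2 l h)) 2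
      (I, memory n L U \<beta> x fl fu (scratch s (max a v) p1 p2 q1 q2 l h))"
    by (rule exec_mono) simp
  from exec_Seq[OF this Cons.IH[OF vs']] show ?case unfolding vs by simp
qed

definition discount :: rexp where
  "discount = RExp (RMul (RSub (RConst 0) (RLoad (NConst 2))) (RofNat (NReg 1)))"

definition discount_next :: rexp where
  "discount_next = RExp (RMul (RSub (RConst 0) (RLoad (NConst 2))) (RofNat (NAdd (NReg 1) (NConst 1))))"

definition RSq :: "rexp \<Rightarrow> rexp" where "RSq e = RMul e e"

definition candidate_term_exprs :: "nat \<Rightarrow> rexp list" where
  "candidate_term_exprs c = (let m = RLoad (ptr_scratch c); a = load_x (NReg 2) in
     [RMul discount (RSub (RSq (RSub (RLoad (NConst 0)) m)) (RSq (RSub a m))),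
      RMul discount (RSub (RSq (RSub (RLoad (NConst 1)) m)) (RSq (RSub a m))),
      RMul discount (RSq (RSub a m)),
      RMul discount_next (RSq (RSub (RLoad (NConst 0)) m)),
      RMul discount_next (RSq (RSub (RLoad (NConst 1)) m))])"

definition candidate_exprs :: "rexp list" where
  "candidate_exprs = candidate_term_exprs 6 @ candidate_term_exprs 7"

lemma length_candidate_exprs: "length candidate_exprs = 10"
  unfolding candidate_exprs_def candidate_term_exprs_def Let_def by simp

lemma candidate_exprs_eval:
  assumes "j < n"
  shows "list_all2 (\<lambda>e v. \<forall>a'. rval e (regs n k j 0 0, memory n L U \<beta> x fl fu
      (scratch s a' p1 p2 q1 q2 (mean_others_lo n L x k j) (mean_others_hi n U x k j))) = v)
     candidate_exprs (candidates n L U \<beta> x k j)"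
  using assms
  unfolding candidate_exprs_def candidate_term_exprs_def candidates_def candidate_terms_def
    discount_def discount_next_def RSq_def Let_def
  by (simp add: power2_eq_square)

definition column_step :: com where
  "column_step = Seq lo_prog (Seq hi_prog (Seq (max_updates candidate_exprs)
     (Seq (RStore (ptr_scratch 6) (RConst 0)) (Seq (RStore (ptr_scratch 7) (RConst 0)) (incr 2)))))"

definition row_prog :: com where
  "row_prog = Seq (NAssign 2 (NConst 0)) (Seq (While (below_n 2) column_step) (NAssign 2 (NConst 0)))"

lemma exec_row_prog:
  "exec row_prog (regs n k 0 0 0, ranked_memory n L U \<beta> x (round_scratch n L U x a k 0 0)) (29 * n + 3)
     (regs n k 0 0 0, ranked_memory n L U \<beta> x
        (round_scratch n L U x (row_max (candidates n L U \<beta> x) k a n) k 0 0))"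
proof -
  let ?f = "candidates n L U \<beta> x"
  define st where "st j = (regs n k j 0 0, ranked_memory n L U \<beta> x (round_scratch n L U x (row_max ?f k a j) k 0 0))"
    for j
  have "bval (below_n 2) (st j) \<and> exec column_step (st j) 28 (st (Suc j))" if j: "j < n" for j
  proof
    show "bval (below_n 2) (st j)" unfolding st_def below_n_def using j by simp
    have updates: "exec (max_updates candidate_exprs)
        (regs n k j 0 0, ranked_memory n L U \<beta> x
          (round_scratch n L U x (row_max ?f k a j) k (mean_others_lo n L x k j) (mean_others_hi n U x k j)))
        (2 * length candidate_exprs + 1)
        (regs n k j 0 0, ranked_memory n L U \<beta> x
          (round_scratch n L U x (row_max ?f k a (Suc j)) k (mean_others_lo n L x k j) (mean_others_hi n U x k j)))"
      unfolding row_max.simps by (rule exec_max_updates) (simp, rule candidate_exprs_eval[OF j])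
    have "exec column_step (st j) (2 + (2 + ((2 * length candidate_exprs + 1) + (1 + (1 + 1))))) (st (Suc j))"
      unfolding column_step_def st_def
      apply (rule exec_Seq[OF exec_lo_prog[OF j]])
      apply (rule exec_Seq[OF exec_hi_prog[OF j]])
      apply (rule exec_Seq[OF updates])
      apply (rule exec_Seq[OF exec_RStore])+
      apply simp
      done
    then show "exec column_step (st j) 28 (st (Suc j))"
      unfolding length_candidate_exprs by (rule exec_mono) simp
  qed
  then have loop: "exec (While (below_n 2) column_step) (st 0) (n * (28 + 1) + 1) (st n)"
    by (intro exec_While) (auto simp: st_def below_n_def)
  have "exec row_prog (regs n k 0 0 0, ranked_memory n L U \<beta> x (round_scratch n L U x a k 0 0))
     (1 + ((n * (28 + 1) + 1) + 1))
     (regs n k 0 0 0, ranked_memory n L U \<beta> x (round_scratch n L U x (row_max ?f k a n) k 0 0))"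
    unfolding row_prog_def
    apply (rule exec_Seq[where sm="st 0"])
     apply (simp add: st_def)
    apply (rule exec_Seq[OF loop])
    apply (simp add: st_def)
    done
  then show ?thesis by (rule exec_mono) simp
qed

definition round_prog :: com where
  "round_prog = Seq top_sums_prog (Seq row_prog
     (Seq (RStore (ptr_scratch 2) (RConst 0)) (Seq (RStore (ptr_scratch 3) (RConst 0))
     (Seq (RStore (ptr_scratch 4) (RConst 0)) (Seq (RStore (ptr_scratch 5) (RConst 0)) (incr 1))))))"

definition rounds_prog :: com where
  "rounds_prog = Seq (NAssign 1 (NConst 0)) (Seq (While (below_n 1) round_prog) (NAssign 1 (NConst 0)))"

lemma exec_rounds_prog:
  "exec rounds_prog (regs n 0 0 0 0, ranked_memory n L U \<beta> x (scratch (\<Sum>i<n. x ! i) 0 0 0 0 0 0 0))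
     (n * (39 * n + 16) + 3)
     (regs n 0 0 0 0, ranked_memory n L U \<beta> x
        (scratch (\<Sum>i<n. x ! i) (running_max (candidates n L U \<beta> x) n n) 0 0 0 0 0 0))"
proof -
  define st where "st k = (regs n k 0 0 0, ranked_memory n L U \<beta> x
     (scratch (\<Sum>i<n. x ! i) (running_max (candidates n L U \<beta> x) n k) 0 0 0 0 0 0))" for k
  have "bval (below_n 1) (st k) \<and> exec round_prog (st k) (39 * n + 15) (st (Suc k))" if k: "k < n" for k
  proof
    show "bval (below_n 1) (st k)" unfolding st_def below_n_def using k by simp
    have "exec round_prog (st k) ((10 * n + 7) + ((29 * n + 3) + (1 + (1 + (1 + (1 + 1)))))) (st (Suc k))"
      unfolding round_prog_def st_def
      apply (rule exec_Seq[OF exec_top_sums_prog])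
      apply (rule exec_Seq[OF exec_row_prog])
      apply (rule exec_Seq[OF exec_RStore])+
      apply simp
      done
    then show "exec round_prog (st k) (39 * n + 15) (st (Suc k))" by (rule exec_mono) simp
  qed
  then have loop: "exec (While (below_n 1) round_prog) (st 0) (n * (39 * n + 15 + 1) + 1) (st n)"
    by (intro exec_While) (auto simp: st_def below_n_def)
  have "exec rounds_prog (regs n 0 0 0 0, ranked_memory n L U \<beta> x (scratch (\<Sum>i<n. x ! i) 0 0 0 0 0 0 0))
     (1 + ((n * (39 * n + 15 + 1) + 1) + 1))
     (regs n 0 0 0 0, ranked_memory n L U \<beta> x
        (scratch (\<Sum>i<n. x ! i) (running_max (candidates n L U \<beta> x) n n) 0 0 0 0 0 0))"
    unfolding rounds_prog_def
    apply (rule exec_Seq[where sm="st 0"])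
     apply (simp add: st_def)
    apply (rule exec_Seq[OF loop])
    apply (simp add: st_def)
    done
  then show ?thesis by (rule exec_mono) (simp add: algebra_simps)
qed

definition output_prog :: com where
  "output_prog = RStore (NConst 0) (RMul (RLoad (ptr_scratch 1))
     (RDiv (RSub (RofNat (NReg 0)) (RConst 1)) (RMul (RofNat (NReg 0)) (RofNat (NReg 0)))))"

definition smooth_sens_prog :: com where
  "smooth_sens_prog =
     Seq sum_prog (Seq (rank_prog gapL ptr_rankL) (Seq (rank_prog gapU ptr_rankU) (Seq rounds_prog output_prog)))"

lemma exec_smooth_sens_prog:
  assumes "length x = n"
  obtains s' where "exec smooth_sens_prog (init_state n L U \<beta> x) (47 * n * n + 35 * n + 14) s'"
    "snd s' 0 = running_max (candidates n L U \<beta> x) n n * ((real n - 1) / (real n * real n))"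
proof -
  let ?s = "\<Sum>i<n. x ! i" and ?a = "running_max (candidates n L U \<beta> x) n n"
  let ?rL = "ranks n (\<lambda>i. x ! i - L)" and ?rU = "ranks n (\<lambda>i. U - x ! i)"
  have rankL: "exec (rank_prog gapL ptr_rankL)
      (regs n 0 0 0 0, memory n L U \<beta> x (\<lambda>_. 0) (\<lambda>_. 0) (scratch ?s 0 0 0 0 0 0 0)) (n * (4 * n + 8) + 3)
      (regs n 0 0 0 0, memory n L U \<beta> x ?rL (\<lambda>_. 0) (scratch ?s 0 0 0 0 0 0 0))"
    by (rule exec_rank_prog[where M = "\<lambda>f. memory n L U \<beta> x f (\<lambda>_. 0) (scratch ?s 0 0 0 0 0 0 0)"
          and ad = "addr_rankL n"]) simp_all
  have rankU: "exec (rank_prog gapU ptr_rankU)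
      (regs n 0 0 0 0, memory n L U \<beta> x ?rL (\<lambda>_. 0) (scratch ?s 0 0 0 0 0 0 0)) (n * (4 * n + 8) + 3)
      (regs n 0 0 0 0, memory n L U \<beta> x ?rL ?rU (scratch ?s 0 0 0 0 0 0 0))"
    by (rule exec_rank_prog[where M = "\<lambda>f. memory n L U \<beta> x ?rL f (scratch ?s 0 0 0 0 0 0 0)"
          and ad = "addr_rankU n"]) simp_all
  have "exec smooth_sens_prog (regs n 0 0 0 0, memory n L U \<beta> x (\<lambda>_. 0) (\<lambda>_. 0) (scratch 0 0 0 0 0 0 0 0))
     ((3 * n + 4) + ((n * (4 * n + 8) + 3) + ((n * (4 * n + 8) + 3) + ((n * (39 * n + 16) + 3) + 1))))
     (regs n 0 0 0 0, (ranked_memory n L U \<beta> x (scratch ?s ?a 0 0 0 0 0 0))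
        (0 := ?a * ((real n - 1) / (real n * real n))))"
    unfolding smooth_sens_prog_def
    apply (rule exec_Seq[OF exec_sum_prog])
    apply (rule exec_Seq[OF rankL])
    apply (rule exec_Seq[OF rankU])
    apply (rule exec_Seq[OF exec_rounds_prog])
    apply (simp add: output_prog_def)
    done
  then have "exec smooth_sens_prog (init_state n L U \<beta> x) (47 * n * n + 35 * n + 14)
     (regs n 0 0 0 0, (ranked_memory n L U \<beta> x (scratch ?s ?a 0 0 0 0 0 0))
        (0 := ?a * ((real n - 1) / (real n * real n))))"
    unfolding init_state_eq[OF assms] by (rule exec_mono) (simp add: algebra_simps)
  then show ?thesis using that by fastforce
qed

lemma smooth_sens_prog_correct:
  assumes V: "V \<in> datasets n L U" and n: "1 \<le> n" and LU: "L < U" and \<beta>: "0 \<le> \<beta>"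
  obtains s' where "exec smooth_sens_prog (init_state n L U \<beta> V) (47 * n * n + 35 * n + 14) s'"
    "snd s' 0 = smooth_sens variance \<beta> n L U V"
proof -
  obtain s' where run: "exec smooth_sens_prog (init_state n L U \<beta> V) (47 * n * n + 35 * n + 14) s'"
    and out: "snd s' 0 = running_max (candidates n L U \<beta> V) n n * ((real n - 1) / (real n * real n))"
    using exec_smooth_sens_prog[OF datasetsD(1)[OF V]] .
  have "snd s' 0 = smooth_sens variance \<beta> n L U V"
    unfolding out smooth_sens_variance[OF V n LU \<beta>] var_scale_def max_candidate_def running_max_eq_Max
    by (simp add: power2_eq_square)
  with run show ?thesis by (rule that)
qed

theorem mainTheorem5:
  shows "\<exists>(P :: com) (C :: nat). \<forall>(n :: nat) (L :: real) (U :: real) (\<beta> :: real) (V :: real list).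
           L < U \<longrightarrow> 1 \<le> n \<longrightarrow> 0 < \<beta> \<longrightarrow> V \<in> datasets n L U \<longrightarrow>
           (\<exists>t s'. big P (init_state n L U \<beta> V) t s' \<and> t \<le> C * n\<^sup>2 \<and>
                   snd s' 0 = smooth_sens variance \<beta> n L U V)"
proof (rule exI[of _ smooth_sens_prog], rule exI[of _ 96], intro allI impI)
  fix n :: nat and L U \<beta> :: real and V :: "real list"
  assume LU: "L < U" and n: "1 \<le> n" and \<beta>: "0 < \<beta>" and V: "V \<in> datasets n L U"
  obtain s' where run: "exec smooth_sens_prog (init_state n L U \<beta> V) (47 * n * n + 35 * n + 14) s'"
    and out: "snd s' 0 = smooth_sens variance \<beta> n L U V"
    using smooth_sens_prog_correct[OF V n LU less_imp_le[OF \<beta>]] .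
  have "n \<le> n * n" "1 \<le> n * n" using n by (simp_all add: mult_le_mono)
  then have "47 * n * n + 35 * n + 14 \<le> 96 * n\<^sup>2" unfolding power2_eq_square by linarith
  then show "\<exists>t s'. big smooth_sens_prog (init_state n L U \<beta> V) t s' \<and> t \<le> 96 * n\<^sup>2 \<and>
      snd s' 0 = smooth_sens variance \<beta> n L U V"
    using run out unfolding exec_def by (meson order_trans)
qed
end
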